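(* For every Gray-category $\mathcal G$, the strict Gray-functor $\overrightarrow{e_{\mathcal G}}:\overrightarrow{Q^1\mathcal G}\to\overrightarrow{\mathcal G}$ is Cartesian with respect to $(-)_1$.
   Context: Conventions: $\#_0,\#_1,\#_2$ are compositions along 0-, 1-, 2-cells in a Gray-category, in applicative order. $(-)_1$ sends a Gray-category to its underlying category of 0- and 1-cells. A strict Gray-functor $F:\mathcal A\to\mathcal B$ is Cartesian with respect to $(-)_1$ if for every strict $K:\mathcal K\to\mathcal B$ and functor $u:\mathcal K_1\to\mathcal A_1$ with $F_1u=K_1$ there is a unique strict $\hat u:\mathcal K\to\mathcal A$ with $\hat u_1=u$ and $F\hat u=K$ (equivalently: bijective on 2-cells between parallel 1-cells and on 3-cells between parallel 2-cells). $Q^1\mathcal G$: same 0-cells as $\mathcal G$; 1-cells nonempty lists $[f_1,\dots,f_n]$ of composable 1-cells modulo insertion/deletion of identities, composed by concatenation; with $\epsilon[f_1,\dots,f_n]=f_1\#_0\cdots\#_0f_n$, 2-cells $(\alpha;u,v)$ with $\alpha:\epsilon u\Rightarrow\epsilon v$ in $\mathcal G$, 3-cells $(\Gamma;\alpha,\beta;u,v)$, operations computed in $\mathcal G$. $e_{\mathcal G}:Q^1\mathcal G\to\mathcal G$ is the identity on 0-cells, $\epsilon$ on 1-cells, projection to the first component on 2-, 3-cells. Path space $\overrightarrow{\mathcal H}$: 0-cells are 1-cells $f:x\to y$; 1-cells $f\to f'$ are $(g_2;g_0,g_1)$ with $g_0:x\to x'$, $g_1:y\to y'$, $g_2:g_1\#_0f\Rightarrow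 f'\#_0g_0$; 2-cells are $(\alpha_3;\alpha_1,\alpha_2)$ with $\alpha_1:g_0\Rightarrow h_0$, $\alpha_2:g_1\Rightarrow h_1$, $\alpha_3:(f'\#_0\alpha_1)\#_1g_2\Rrightarrow h_2\#_1(\alpha_2\#_0f)$; 3-cells pairs $(\Gamma_1,\Gamma_2)$, $\Gamma_i:\alpha_i\Rrightarrow\beta_i$, with $\beta_3\#_2((f'\#_0\Gamma_1)\#_1g_2)=(h_2\#_1(\Gamma_2\#_0f))\#_2\alpha_3$; operations by pasting in $\mathcal H$. For strict $F$, $\overrightarrow F$ applies $F$ to all components. *)

theory Defs
  imports Main
begin

section \<open>Gray-categories (explicit, non-strict-interchange presentation)\<close>

text \<open>
  All compositions are in applicative order.
  c0 g f = g #0 f (1-cells), c1 b a = b #1 a (2-cells in a hom 2-category),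
  c2 D C = D #2 C (3-cells, vertical), c13 D C = D #1 C (3-cells, horizontal within a
  hom 2-category), wl2 g a = g #0 a, wr2 a f = a #0 f (whiskering of 2-cells by 1-cells),
  wl3, wr3 likewise for 3-cells, and ic b a is the interchange 3-cell
  Sigma(b,a) : (b' #0 a) #1 (b #0 f) => (b #0 f') #1 (g #0 a)
  for a : f => f' in G(x,y) and b : g => g' in G(y,z).
  Operations are total HOL functions, meaningful only on composable cells of the carriers.
\<close>

record ('o,'a,'b,'c) gray_data =
  Ob :: "'o set"
  Ar :: "'a set"
  Tw :: "'b set"
  Th :: "'c set"
  s1 :: "'a \<Rightarrow> 'o"
  t1 :: "'a \<Rightarrow> 'o"
  s2 :: "'b \<Rightarrow> 'a"
  t2 :: "'b \<Rightarrow> 'a"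
  s3 :: "'c \<Rightarrow> 'b"
  t3 :: "'c \<Rightarrow> 'b"
  i1 :: "'o \<Rightarrow> 'a"
  i2 :: "'a \<Rightarrow> 'b"
  i3 :: "'b \<Rightarrow> 'c"
  c0 :: "'a \<Rightarrow> 'a \<Rightarrow> 'a"
  c1 :: "'b \<Rightarrow> 'b \<Rightarrow> 'b"
  c2 :: "'c \<Rightarrow> 'c \<Rightarrow> 'c"
  c13 :: "'c \<Rightarrow> 'c \<Rightarrow> 'c"
  wl2 :: "'a \<Rightarrow> 'b \<Rightarrow> 'b"
  wr2 :: "'b \<Rightarrow> 'a \<Rightarrow> 'b"
  wl3 :: "'a \<Rightarrow> 'c \<Rightarrow> 'c"
  wr3 :: "'c \<Rightarrow> 'a \<Rightarrow> 'c"
  ic :: "'b \<Rightarrow> 'b \<Rightarrow> 'c"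

locale gray_category =
  fixes G :: "('o,'a,'b,'c) gray_data"
  assumes
    ar_typ: "f \<in> Ar G \<Longrightarrow> s1 G f \<in> Ob G \<and> t1 G f \<in> Ob G"
  and tw_typ: "a \<in> Tw G \<Longrightarrow> s2 G a \<in> Ar G \<and> t2 G a \<in> Ar G
        \<and> s1 G (s2 G a) = s1 G (t2 G a) \<and> t1 G (s2 G a) = t1 G (t2 G a)"
  and th_typ: "C \<in> Th G \<Longrightarrow> s3 G C \<in> Tw G \<and> t3 G C \<in> Tw G
        \<and> s2 G (s3 G C) = s2 G (t3 G C) \<and> t2 G (s3 G C) = t2 G (t3 G C)"
  and i1_typ: "x \<in> Ob G \<Longrightarrow> i1 G x \<in> Ar G \<and> s1 G (i1 G x) = x \<and> t1 G (i1 G x) = x"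
  and i2_typ: "f \<in> Ar G \<Longrightarrow> i2 G f \<in> Tw G \<and> s2 G (i2 G f) = f \<and> t2 G (i2 G f) = f"
  and i3_typ: "a \<in> Tw G \<Longrightarrow> i3 G a \<in> Th G \<and> s3 G (i3 G a) = a \<and> t3 G (i3 G a) = a"
  and c0_typ: "\<lbrakk>f \<in> Ar G; g \<in> Ar G; t1 G f = s1 G g\<rbrakk> \<Longrightarrow>
        c0 G g f \<in> Ar G \<and> s1 G (c0 G g f) = s1 G f \<and> t1 G (c0 G g f) = t1 G g"
  and c0_assoc: "\<lbrakk>f \<in> Ar G; g \<in> Ar G; h \<in> Ar G; t1 G f = s1 G g; t1 G g = s1 G h\<rbrakk> \<Longrightarrow>
        c0 G h (c0 G g f) = c0 G (c0 G h g) f"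
  and c0_unit: "f \<in> Ar G \<Longrightarrow> c0 G (i1 G (t1 G f)) f = f \<and> c0 G f (i1 G (s1 G f)) = f"
  and c1_typ: "\<lbrakk>a \<in> Tw G; b \<in> Tw G; t2 G a = s2 G b\<rbrakk> \<Longrightarrow>
        c1 G b a \<in> Tw G \<and> s2 G (c1 G b a) = s2 G a \<and> t2 G (c1 G b a) = t2 G b"
  and c1_assoc: "\<lbrakk>a \<in> Tw G; b \<in> Tw G; c \<in> Tw G; t2 G a = s2 G b; t2 G b = s2 G c\<rbrakk> \<Longrightarrow>
        c1 G c (c1 G b a) = c1 G (c1 G c b) a"
  and c1_unit: "a \<in> Tw G \<Longrightarrow> c1 G (i2 G (t2 G a)) a = a \<and> c1 G a (i2 G (s2 G a)) = a"
  and c2_typ: "\<lbrakk>C \<in> Th G; D \<in> Th G; t3 G C = s3 G D\<rbrakk> \<Longrightarrow>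
        c2 G D C \<in> Th G \<and> s3 G (c2 G D C) = s3 G C \<and> t3 G (c2 G D C) = t3 G D"
  and c2_assoc: "\<lbrakk>C \<in> Th G; D \<in> Th G; E \<in> Th G; t3 G C = s3 G D; t3 G D = s3 G E\<rbrakk> \<Longrightarrow>
        c2 G E (c2 G D C) = c2 G (c2 G E D) C"
  and c2_unit: "C \<in> Th G \<Longrightarrow> c2 G (i3 G (t3 G C)) C = C \<and> c2 G C (i3 G (s3 G C)) = C"
  and c13_typ: "\<lbrakk>C \<in> Th G; D \<in> Th G; t2 G (s3 G C) = s2 G (s3 G D)\<rbrakk> \<Longrightarrow>
        c13 G D C \<in> Th G \<and> s3 G (c13 G D C) = c1 G (s3 G D) (s3 G C)
        \<and> t3 G (c13 G D C) = c1 G (t3 G D) (t3 G C)"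
  and c13_assoc: "\<lbrakk>C \<in> Th G; D \<in> Th G; E \<in> Th G;
        t2 G (s3 G C) = s2 G (s3 G D); t2 G (s3 G D) = s2 G (s3 G E)\<rbrakk> \<Longrightarrow>
        c13 G E (c13 G D C) = c13 G (c13 G E D) C"
  and c13_unit: "C \<in> Th G \<Longrightarrow> c13 G (i3 G (i2 G (t2 G (s3 G C)))) C = C
        \<and> c13 G C (i3 G (i2 G (s2 G (s3 G C)))) = C"
  and c13_id: "\<lbrakk>a \<in> Tw G; b \<in> Tw G; t2 G a = s2 G b\<rbrakk> \<Longrightarrow>
        c13 G (i3 G b) (i3 G a) = i3 G (c1 G b a)"
  and c13_c2: "\<lbrakk>C \<in> Th G; C' \<in> Th G; D \<in> Th G; D' \<in> Th G;
        t3 G C = s3 G C'; t3 G D = s3 G D'; t2 G (s3 G C) = s2 G (s3 G D)\<rbrakk> \<Longrightarrow>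
        c13 G (c2 G D' D) (c2 G C' C) = c2 G (c13 G D' C') (c13 G D C)"
  and wl2_typ: "\<lbrakk>g \<in> Ar G; a \<in> Tw G; t1 G (s2 G a) = s1 G g\<rbrakk> \<Longrightarrow>
        wl2 G g a \<in> Tw G \<and> s2 G (wl2 G g a) = c0 G g (s2 G a) \<and> t2 G (wl2 G g a) = c0 G g (t2 G a)"
  and wr2_typ: "\<lbrakk>f \<in> Ar G; a \<in> Tw G; s1 G (s2 G a) = t1 G f\<rbrakk> \<Longrightarrow>
        wr2 G a f \<in> Tw G \<and> s2 G (wr2 G a f) = c0 G (s2 G a) f \<and> t2 G (wr2 G a f) = c0 G (t2 G a) f"
  and wl3_typ: "\<lbrakk>g \<in> Ar G; C \<in> Th G; t1 G (s2 G (s3 G C)) = s1 G g\<rbrakk> \<Longrightarrow>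
        wl3 G g C \<in> Th G \<and> s3 G (wl3 G g C) = wl2 G g (s3 G C) \<and> t3 G (wl3 G g C) = wl2 G g (t3 G C)"
  and wr3_typ: "\<lbrakk>f \<in> Ar G; C \<in> Th G; s1 G (s2 G (s3 G C)) = t1 G f\<rbrakk> \<Longrightarrow>
        wr3 G C f \<in> Th G \<and> s3 G (wr3 G C f) = wr2 G (s3 G C) f \<and> t3 G (wr3 G C f) = wr2 G (t3 G C) f"
  and wl2_i2: "\<lbrakk>g \<in> Ar G; h \<in> Ar G; t1 G h = s1 G g\<rbrakk> \<Longrightarrow> wl2 G g (i2 G h) = i2 G (c0 G g h)"
  and wl2_c1: "\<lbrakk>g \<in> Ar G; a \<in> Tw G; b \<in> Tw G; t2 G a = s2 G b; t1 G (s2 G a) = s1 G g\<rbrakk> \<Longrightarrow>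
        wl2 G g (c1 G b a) = c1 G (wl2 G g b) (wl2 G g a)"
  and wl3_i3: "\<lbrakk>g \<in> Ar G; a \<in> Tw G; t1 G (s2 G a) = s1 G g\<rbrakk> \<Longrightarrow> wl3 G g (i3 G a) = i3 G (wl2 G g a)"
  and wl3_c2: "\<lbrakk>g \<in> Ar G; C \<in> Th G; D \<in> Th G; t3 G C = s3 G D; t1 G (s2 G (s3 G C)) = s1 G g\<rbrakk> \<Longrightarrow>
        wl3 G g (c2 G D C) = c2 G (wl3 G g D) (wl3 G g C)"
  and wl3_c13: "\<lbrakk>g \<in> Ar G; C \<in> Th G; D \<in> Th G; t2 G (s3 G C) = s2 G (s3 G D);
        t1 G (s2 G (s3 G C)) = s1 G g\<rbrakk> \<Longrightarrow>
        wl3 G g (c13 G D C) = c13 G (wl3 G g D) (wl3 G g C)"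
  and wr2_i2: "\<lbrakk>f \<in> Ar G; h \<in> Ar G; s1 G h = t1 G f\<rbrakk> \<Longrightarrow> wr2 G (i2 G h) f = i2 G (c0 G h f)"
  and wr2_c1: "\<lbrakk>f \<in> Ar G; a \<in> Tw G; b \<in> Tw G; t2 G a = s2 G b; s1 G (s2 G a) = t1 G f\<rbrakk> \<Longrightarrow>
        wr2 G (c1 G b a) f = c1 G (wr2 G b f) (wr2 G a f)"
  and wr3_i3: "\<lbrakk>f \<in> Ar G; a \<in> Tw G; s1 G (s2 G a) = t1 G f\<rbrakk> \<Longrightarrow> wr3 G (i3 G a) f = i3 G (wr2 G a f)"
  and wr3_c2: "\<lbrakk>f \<in> Ar G; C \<in> Th G; D \<in> Th G; t3 G C = s3 G D; s1 G (s2 G (s3 G C)) = t1 G f\<rbrakk> \<Longrightarrow>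
        wr3 G (c2 G D C) f = c2 G (wr3 G D f) (wr3 G C f)"
  and wr3_c13: "\<lbrakk>f \<in> Ar G; C \<in> Th G; D \<in> Th G; t2 G (s3 G C) = s2 G (s3 G D);
        s1 G (s2 G (s3 G C)) = t1 G f\<rbrakk> \<Longrightarrow>
        wr3 G (c13 G D C) f = c13 G (wr3 G D f) (wr3 G C f)"
  and wl2_i1: "a \<in> Tw G \<Longrightarrow> wl2 G (i1 G (t1 G (s2 G a))) a = a"
  and wr2_i1: "a \<in> Tw G \<Longrightarrow> wr2 G a (i1 G (s1 G (s2 G a))) = a"
  and wl3_i1: "C \<in> Th G \<Longrightarrow> wl3 G (i1 G (t1 G (s2 G (s3 G C)))) C = C"
  and wr3_i1: "C \<in> Th G \<Longrightarrow> wr3 G C (i1 G (s1 G (s2 G (s3 G C)))) = C"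
  and wl2_c0: "\<lbrakk>g \<in> Ar G; h \<in> Ar G; a \<in> Tw G; t1 G (s2 G a) = s1 G g; t1 G g = s1 G h\<rbrakk> \<Longrightarrow>
        wl2 G h (wl2 G g a) = wl2 G (c0 G h g) a"
  and wr2_c0: "\<lbrakk>e \<in> Ar G; f \<in> Ar G; a \<in> Tw G; s1 G (s2 G a) = t1 G f; s1 G f = t1 G e\<rbrakk> \<Longrightarrow>
        wr2 G (wr2 G a f) e = wr2 G a (c0 G f e)"
  and wlr2: "\<lbrakk>f \<in> Ar G; g \<in> Ar G; a \<in> Tw G; s1 G (s2 G a) = t1 G f; t1 G (s2 G a) = s1 G g\<rbrakk> \<Longrightarrow>
        wr2 G (wl2 G g a) f = wl2 G g (wr2 G a f)"
  and wl3_c0: "\<lbrakk>g \<in> Ar G; h \<in> Ar G; C \<in> Th G; t1 G (s2 G (s3 G C)) = s1 G g; t1 G g = s1 G h\<rbrakk> \<Longrightarrow>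
        wl3 G h (wl3 G g C) = wl3 G (c0 G h g) C"
  and wr3_c0: "\<lbrakk>e \<in> Ar G; f \<in> Ar G; C \<in> Th G; s1 G (s2 G (s3 G C)) = t1 G f; s1 G f = t1 G e\<rbrakk> \<Longrightarrow>
        wr3 G (wr3 G C f) e = wr3 G C (c0 G f e)"
  and wlr3: "\<lbrakk>f \<in> Ar G; g \<in> Ar G; C \<in> Th G; s1 G (s2 G (s3 G C)) = t1 G f;
        t1 G (s2 G (s3 G C)) = s1 G g\<rbrakk> \<Longrightarrow>
        wr3 G (wl3 G g C) f = wl3 G g (wr3 G C f)"
  and ic_typ: "\<lbrakk>a \<in> Tw G; b \<in> Tw G; s1 G (s2 G b) = t1 G (s2 G a)\<rbrakk> \<Longrightarrow>
        ic G b a \<in> Th G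
        \<and> s3 G (ic G b a) = c1 G (wl2 G (t2 G b) a) (wr2 G b (s2 G a))
        \<and> t3 G (ic G b a) = c1 G (wr2 G b (t2 G a)) (wl2 G (s2 G b) a)"
  and ic_inv: "\<lbrakk>a \<in> Tw G; b \<in> Tw G; s1 G (s2 G b) = t1 G (s2 G a)\<rbrakk> \<Longrightarrow>
        \<exists>D \<in> Th G. s3 G D = t3 G (ic G b a) \<and> t3 G D = s3 G (ic G b a)
          \<and> c2 G D (ic G b a) = i3 G (s3 G (ic G b a))
          \<and> c2 G (ic G b a) D = i3 G (t3 G (ic G b a))"
  and ic_i2_left: "\<lbrakk>a \<in> Tw G; g \<in> Ar G; s1 G g = t1 G (s2 G a)\<rbrakk> \<Longrightarrow>
        ic G (i2 G g) a = i3 G (wl2 G g a)"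
  and ic_i2_right: "\<lbrakk>b \<in> Tw G; f \<in> Ar G; s1 G (s2 G b) = t1 G f\<rbrakk> \<Longrightarrow>
        ic G b (i2 G f) = i3 G (wr2 G b f)"
  and ic_c1_left: "\<lbrakk>a \<in> Tw G; b \<in> Tw G; b' \<in> Tw G; t2 G b = s2 G b'; s1 G (s2 G b) = t1 G (s2 G a)\<rbrakk> \<Longrightarrow>
        ic G (c1 G b' b) a
        = c2 G (c13 G (i3 G (wr2 G b' (t2 G a))) (ic G b a))
               (c13 G (ic G b' a) (i3 G (wr2 G b (s2 G a))))"
  and ic_c1_right: "\<lbrakk>a \<in> Tw G; a' \<in> Tw G; b \<in> Tw G; t2 G a = s2 G a'; s1 G (s2 G b) = t1 G (s2 G a)\<rbrakk> \<Longrightarrow>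
        ic G b (c1 G a' a)
        = c2 G (c13 G (ic G b a') (i3 G (wl2 G (s2 G b) a)))
               (c13 G (i3 G (wl2 G (t2 G b) a')) (ic G b a))"
  and ic_nat: "\<lbrakk>C \<in> Th G; D \<in> Th G; s1 G (s2 G (s3 G D)) = t1 G (s2 G (s3 G C))\<rbrakk> \<Longrightarrow>
        c2 G (ic G (t3 G D) (t3 G C)) (c13 G (wl3 G (t2 G (s3 G D)) C) (wr3 G D (s2 G (s3 G C))))
        = c2 G (c13 G (wr3 G D (t2 G (s3 G C))) (wl3 G (s2 G (s3 G D)) C)) (ic G (s3 G D) (s3 G C))"
  and ic_wr: "\<lbrakk>a \<in> Tw G; b \<in> Tw G; e \<in> Ar G; s1 G (s2 G b) = t1 G (s2 G a); t1 G e = s1 G (s2 G a)\<rbrakk> \<Longrightarrow>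
        ic G b (wr2 G a e) = wr3 G (ic G b a) e"
  and ic_wl: "\<lbrakk>a \<in> Tw G; b \<in> Tw G; h \<in> Ar G; s1 G (s2 G b) = t1 G (s2 G a); s1 G h = t1 G (s2 G b)\<rbrakk> \<Longrightarrow>
        ic G (wl2 G h b) a = wl3 G h (ic G b a)"
  and ic_mid: "\<lbrakk>a \<in> Tw G; b \<in> Tw G; k \<in> Ar G; s1 G k = t1 G (s2 G a); t1 G k = s1 G (s2 G b)\<rbrakk> \<Longrightarrow>
        ic G (wr2 G b k) a = ic G b (wl2 G k a)"

definition ic_inv :: "('o,'a,'b,'c,'z) gray_data_scheme \<Rightarrow> 'b \<Rightarrow> 'b \<Rightarrow> 'c" where
  "ic_inv G b a = (THE D. D \<in> Th G \<and> s3 G D = t3 G (ic G b a) \<and> t3 G D = s3 G (ic G b a)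
      \<and> c2 G D (ic G b a) = i3 G (s3 G (ic G b a)) \<and> c2 G (ic G b a) D = i3 G (t3 G (ic G b a)))"

section \<open>Strict Gray-functors and functors of underlying categories\<close>

record ('o,'a,'b,'c,'o2,'a2,'b2,'c2) gray_fun =
  fOb :: "'o \<Rightarrow> 'o2"
  fAr :: "'a \<Rightarrow> 'a2"
  fTw :: "'b \<Rightarrow> 'b2"
  fTh :: "'c \<Rightarrow> 'c2"

definition strict_gray_functor ::
  "('o,'a,'b,'c) gray_data \<Rightarrow> ('o2,'a2,'b2,'c2) gray_data \<Rightarrow>
   ('o,'a,'b,'c,'o2,'a2,'b2,'c2) gray_fun \<Rightarrow> bool" where
  "strict_gray_functor A B F \<longleftrightarrow>
     (\<forall>x \<in> Ob A. fOb F x \<in> Ob B) \<and> (\<forall>f \<in> Ar A. fAr F f \<in> Ar B)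
   \<and> (\<forall>a \<in> Tw A. fTw F a \<in> Tw B) \<and> (\<forall>C \<in> Th A. fTh F C \<in> Th B)
   \<and> (\<forall>f \<in> Ar A. fOb F (s1 A f) = s1 B (fAr F f) \<and> fOb F (t1 A f) = t1 B (fAr F f))
   \<and> (\<forall>a \<in> Tw A. fAr F (s2 A a) = s2 B (fTw F a) \<and> fAr F (t2 A a) = t2 B (fTw F a))
   \<and> (\<forall>C \<in> Th A. fTw F (s3 A C) = s3 B (fTh F C) \<and> fTw F (t3 A C) = t3 B (fTh F C))
   \<and> (\<forall>x \<in> Ob A. fAr F (i1 A x) = i1 B (fOb F x))
   \<and> (\<forall>f \<in> Ar A. fTw F (i2 A f) = i2 B (fAr F f))
   \<and> (\<forall>a \<in> Tw A. fTh F (i3 A a) = i3 B (fTw F a))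
   \<and> (\<forall>f \<in> Ar A. \<forall>g \<in> Ar A. t1 A f = s1 A g \<longrightarrow> fAr F (c0 A g f) = c0 B (fAr F g) (fAr F f))
   \<and> (\<forall>a \<in> Tw A. \<forall>b \<in> Tw A. t2 A a = s2 A b \<longrightarrow> fTw F (c1 A b a) = c1 B (fTw F b) (fTw F a))
   \<and> (\<forall>C \<in> Th A. \<forall>D \<in> Th A. t3 A C = s3 A D \<longrightarrow> fTh F (c2 A D C) = c2 B (fTh F D) (fTh F C))
   \<and> (\<forall>C \<in> Th A. \<forall>D \<in> Th A. t2 A (s3 A C) = s2 A (s3 A D) \<longrightarrow>
        fTh F (c13 A D C) = c13 B (fTh F D) (fTh F C))
   \<and> (\<forall>g \<in> Ar A. \<forall>a \<in> Tw A. t1 A (s2 A a) = s1 A g \<longrightarrow> fTw F (wl2 A g a) = wl2 B (fAr F g) (fTw F a))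
   \<and> (\<forall>f \<in> Ar A. \<forall>a \<in> Tw A. s1 A (s2 A a) = t1 A f \<longrightarrow> fTw F (wr2 A a f) = wr2 B (fTw F a) (fAr F f))
   \<and> (\<forall>g \<in> Ar A. \<forall>C \<in> Th A. t1 A (s2 A (s3 A C)) = s1 A g \<longrightarrow>
        fTh F (wl3 A g C) = wl3 B (fAr F g) (fTh F C))
   \<and> (\<forall>f \<in> Ar A. \<forall>C \<in> Th A. s1 A (s2 A (s3 A C)) = t1 A f \<longrightarrow>
        fTh F (wr3 A C f) = wr3 B (fTh F C) (fAr F f))
   \<and> (\<forall>a \<in> Tw A. \<forall>b \<in> Tw A. s1 A (s2 A b) = t1 A (s2 A a) \<longrightarrow>
        fTh F (ic A b a) = ic B (fTw F b) (fTw F a))"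

text \<open>A functor between the underlying categories of 0- and 1-cells, (-)_1.\<close>
definition functor1 ::
  "('o,'a,'b,'c) gray_data \<Rightarrow> ('o2,'a2,'b2,'c2) gray_data \<Rightarrow> ('o \<Rightarrow> 'o2) \<times> ('a \<Rightarrow> 'a2) \<Rightarrow> bool" where
  "functor1 A B u \<longleftrightarrow>
     (\<forall>x \<in> Ob A. fst u x \<in> Ob B) \<and> (\<forall>f \<in> Ar A. snd u f \<in> Ar B)
   \<and> (\<forall>f \<in> Ar A. fst u (s1 A f) = s1 B (snd u f) \<and> fst u (t1 A f) = t1 B (snd u f))
   \<and> (\<forall>x \<in> Ob A. snd u (i1 A x) = i1 B (fst u x))
   \<and> (\<forall>f \<in> Ar A. \<forall>g \<in> Ar A. t1 A f = s1 A g \<longrightarrow> snd u (c0 A g f) = c0 B (snd u g) (snd u f))"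

definition gcomp :: "('o2,'a2,'b2,'c2,'o3,'a3,'b3,'c3) gray_fun \<Rightarrow> ('o,'a,'b,'c,'o2,'a2,'b2,'c2) gray_fun
    \<Rightarrow> ('o,'a,'b,'c,'o3,'a3,'b3,'c3) gray_fun" where
  "gcomp F H = \<lparr>fOb = fOb F \<circ> fOb H, fAr = fAr F \<circ> fAr H, fTw = fTw F \<circ> fTw H, fTh = fTh F \<circ> fTh H\<rparr>"

definition gfun_eq_on :: "('o,'a,'b,'c) gray_data \<Rightarrow> ('o,'a,'b,'c,'o2,'a2,'b2,'c2) gray_fun
    \<Rightarrow> ('o,'a,'b,'c,'o2,'a2,'b2,'c2) gray_fun \<Rightarrow> bool" where
  "gfun_eq_on K F H \<longleftrightarrow> (\<forall>x \<in> Ob K. fOb F x = fOb H x) \<and> (\<forall>f \<in> Ar K. fAr F f = fAr H f)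
     \<and> (\<forall>a \<in> Tw K. fTw F a = fTw H a) \<and> (\<forall>C \<in> Th K. fTh F C = fTh H C)"

definition fun1_eq_on :: "('o,'a,'b,'c) gray_data \<Rightarrow> ('o \<Rightarrow> 'o2) \<times> ('a \<Rightarrow> 'a2)
    \<Rightarrow> ('o \<Rightarrow> 'o2) \<times> ('a \<Rightarrow> 'a2) \<Rightarrow> bool" where
  "fun1_eq_on K u v \<longleftrightarrow> (\<forall>x \<in> Ob K. fst u x = fst v x) \<and> (\<forall>f \<in> Ar K. snd u f = snd v f)"

definition under1 :: "('o,'a,'b,'c,'o2,'a2,'b2,'c2) gray_fun \<Rightarrow> ('o \<Rightarrow> 'o2) \<times> ('a \<Rightarrow> 'a2)" where
  "under1 F = (fOb F, fAr F)"

text \<open>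
  Cartesianness of F : A -> B with respect to (-)_1, tested against Gray-categories KK
  of one fixed (arbitrary) type; a theorem quantifying over the type variables of KK
  expresses the condition for all Gray-categories KK.
\<close>
definition cartesian1_wrt ::
  "('p,'d,'e,'f) gray_data \<Rightarrow> ('o,'a,'b,'c) gray_data \<Rightarrow> ('o2,'a2,'b2,'c2) gray_data \<Rightarrow>
   ('o,'a,'b,'c,'o2,'a2,'b2,'c2) gray_fun \<Rightarrow> bool" where
  "cartesian1_wrt KK A B F \<longleftrightarrow>
     (\<forall>K u. strict_gray_functor KK B K \<longrightarrow> functor1 KK A u
        \<longrightarrow> (\<forall>x \<in> Ob KK. fOb F (fst u x) = fOb K x) \<and> (\<forall>f \<in> Ar KK. fAr F (snd u f) = fAr K f)
        \<longrightarrow> (\<exists>uh. strict_gray_functor KK A uh \<and> fun1_eq_on KK (under1 uh) u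
                 \<and> gfun_eq_on KK (gcomp F uh) K
                 \<and> (\<forall>uh'. strict_gray_functor KK A uh' \<and> fun1_eq_on KK (under1 uh') u
                          \<and> gfun_eq_on KK (gcomp F uh') K \<longrightarrow> gfun_eq_on KK uh' uh)))"

section \<open>The Gray-category Q^1 G\<close>

text \<open>
  A 1-cell of Q^1 G is an equivalence class of nonempty composable lists of 1-cells of G
  modulo insertion/deletion of identities.  We represent each class by its unique normal
  form (x, y, fs): the source x, the target y and the list fs of non-identity 1-cells
  obtained by deleting all identities (fs = [] represents the class of [1_x]).
  A list [f_1,...,f_n] has f_1 as its last (outermost) factor: eps = f_1 #0 ... #0 f_n.
\<close>

fun qchain :: "('o,'a,'b,'c) gray_data \<Rightarrow> 'o \<Rightarrow> 'o \<Rightarrow> 'a list \<Rightarrow> bool" where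
  "qchain G x y [] \<longleftrightarrow> x = y \<and> x \<in> Ob G"
| "qchain G x y (f # fs) \<longleftrightarrow> f \<in> Ar G \<and> f \<noteq> i1 G (s1 G f) \<and> t1 G f = y \<and> qchain G x (s1 G f) fs"

definition qeps :: "('o,'a,'b,'c) gray_data \<Rightarrow> 'o \<times> 'o \<times> 'a list \<Rightarrow> 'a" where
  "qeps G u = (case u of (x, y, fs) \<Rightarrow> foldr (c0 G) fs (i1 G x))"

definition qc0 :: "'o \<times> 'o \<times> 'a list \<Rightarrow> 'o \<times> 'o \<times> 'a list \<Rightarrow> 'o \<times> 'o \<times> 'a list" where
  "qc0 v u = (fst u, fst (snd v), snd (snd v) @ snd (snd u))"

definition Q1 :: "('o,'a,'b,'c) gray_data \<Rightarrow>
   ('o, 'o \<times> 'o \<times> 'a list, 'b \<times> ('o \<times> 'o \<times> 'a list) \<times> ('o \<times> 'o \<times> 'a list),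
    'c \<times> 'b \<times> 'b \<times> ('o \<times> 'o \<times> 'a list) \<times> ('o \<times> 'o \<times> 'a list)) gray_data" where
  "Q1 G = (let
      QAr = {(x, y, fs). qchain G x y fs};
      QTw = {(a, u, v). u \<in> QAr \<and> v \<in> QAr \<and> fst u = fst v \<and> fst (snd u) = fst (snd v)
                   \<and> a \<in> Tw G \<and> s2 G a = qeps G u \<and> t2 G a = qeps G v}
    in \<lparr> Ob = Ob G,
      Ar = QAr,
      Tw = QTw,
      Th = {(C, a, b, u, v). (a, u, v) \<in> QTw \<and> (b, u, v) \<in> QTw \<and> C \<in> Th G \<and> s3 G C = a \<and> t3 G C = b},
      s1 = (\<lambda>u. fst u),
      t1 = (\<lambda>u. fst (snd u)),
      s2 = (\<lambda>(a, u, v). u),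
      t2 = (\<lambda>(a, u, v). v),
      s3 = (\<lambda>(C, a, b, u, v). (a, u, v)),
      t3 = (\<lambda>(C, a, b, u, v). (b, u, v)),
      i1 = (\<lambda>x. (x, x, [])),
      i2 = (\<lambda>u. (i2 G (qeps G u), u, u)),
      i3 = (\<lambda>(a, u, v). (i3 G a, a, a, u, v)),
      c0 = qc0,
      c1 = (\<lambda>(b, v, w) (a, u, v'). (c1 G b a, u, w)),
      c2 = (\<lambda>(D, b', c, _, _) (C, a, b, u, v). (c2 G D C, a, c, u, v)),
      c13 = (\<lambda>(D, a', b', v, w) (C, a, b, u, v'). (c13 G D C, c1 G a' a, c1 G b' b, u, w)),
      wl2 = (\<lambda>g (a, u, v). (wl2 G (qeps G g) a, qc0 g u, qc0 g v)),
      wr2 = (\<lambda>(a, u, v) f. (wr2 G a (qeps G f), qc0 u f, qc0 v f)),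
      wl3 = (\<lambda>g (C, a, b, u, v). (wl3 G (qeps G g) C, wl2 G (qeps G g) a, wl2 G (qeps G g) b,
                                 qc0 g u, qc0 g v)),
      wr3 = (\<lambda>(C, a, b, u, v) f. (wr3 G C (qeps G f), wr2 G a (qeps G f), wr2 G b (qeps G f),
                                 qc0 u f, qc0 v f)),
      ic = (\<lambda>(b, g, g') (a, f, f').
              (ic G b a,
               c1 G (wl2 G (qeps G g') a) (wr2 G b (qeps G f)),
               c1 G (wr2 G b (qeps G f')) (wl2 G (qeps G g) a),
               qc0 g f, qc0 g' f')) \<rparr>)"

definition eQ :: "('o,'a,'b,'c) gray_data \<Rightarrow>
   ('o, 'o \<times> 'o \<times> 'a list, 'b \<times> ('o \<times> 'o \<times> 'a list) \<times> ('o \<times> 'o \<times> 'a list),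
    'c \<times> 'b \<times> 'b \<times> ('o \<times> 'o \<times> 'a list) \<times> ('o \<times> 'o \<times> 'a list), 'o, 'a, 'b, 'c) gray_fun" where
  "eQ G = \<lparr>fOb = (\<lambda>x. x), fAr = qeps G, fTw = fst, fTh = fst\<rparr>"

section \<open>The path space of a Gray-category\<close>

text \<open>
  0-cells: 1-cells f of H.  1-cells f -> f': tuples (f, f', g0, g1, g2) (source and target
  recorded explicitly) with g2 : g1 #0 f => f' #0 g0.  2-cells g => h: tuples
  (g, h, a1, a2, a3) with a3 : (f' #0 a1) #1 g2 => h2 #1 (a2 #0 f).  3-cells a => b:
  tuples (a, b, C1, C2) subject to the equation of the paper.
\<close>

definition pc0 :: "('o,'a,'b,'c) gray_data \<Rightarrow> 'a \<times> 'a \<times> 'a \<times> 'a \<times> 'b \<Rightarrow> 'a \<times> 'a \<times> 'a \<times> 'a \<times> 'b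
    \<Rightarrow> 'a \<times> 'a \<times> 'a \<times> 'a \<times> 'b" where
  "pc0 H k g = (case k of (f', f'', h0, h1, h2) \<Rightarrow> case g of (f, _, g0, g1, g2) \<Rightarrow>
      (f, f'', c0 H h0 g0, c0 H h1 g1, c1 H (wr2 H h2 g0) (wl2 H h1 g2)))"

definition pc1 :: "('o,'a,'b,'c) gray_data \<Rightarrow>
    ('a \<times> 'a \<times> 'a \<times> 'a \<times> 'b) \<times> ('a \<times> 'a \<times> 'a \<times> 'a \<times> 'b) \<times> 'b \<times> 'b \<times> 'c \<Rightarrow>
    ('a \<times> 'a \<times> 'a \<times> 'a \<times> 'b) \<times> ('a \<times> 'a \<times> 'a \<times> 'a \<times> 'b) \<times> 'b \<times> 'b \<times> 'c \<Rightarrow>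
    ('a \<times> 'a \<times> 'a \<times> 'a \<times> 'b) \<times> ('a \<times> 'a \<times> 'a \<times> 'a \<times> 'b) \<times> 'b \<times> 'b \<times> 'c" where
  "pc1 H be al = (case be of (_, k, b1, b2, b3) \<Rightarrow> case al of (g, _, a1, a2, a3) \<Rightarrow>
      case g of (f, f', _, _, _) \<Rightarrow>
      (g, k, c1 H b1 a1, c1 H b2 a2,
       c2 H (c13 H b3 (i3 H (wr2 H a2 f))) (c13 H (i3 H (wl2 H f' b1)) a3)))"

definition pwl2 :: "('o,'a,'b,'c) gray_data \<Rightarrow> 'a \<times> 'a \<times> 'a \<times> 'a \<times> 'b \<Rightarrow>
    ('a \<times> 'a \<times> 'a \<times> 'a \<times> 'b) \<times> ('a \<times> 'a \<times> 'a \<times> 'a \<times> 'b) \<times> 'b \<times> 'b \<times> 'c \<Rightarrow>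
    ('a \<times> 'a \<times> 'a \<times> 'a \<times> 'b) \<times> ('a \<times> 'a \<times> 'a \<times> 'a \<times> 'b) \<times> 'b \<times> 'b \<times> 'c" where
  "pwl2 H k al = (case k of (_, _, h0, h1, h2) \<Rightarrow> case al of (g, g', a1, a2, a3) \<Rightarrow>
      case g of (_, _, g0, _, g2) \<Rightarrow> case g' of (_, _, g0', _, _) \<Rightarrow>
      (pc0 H k g, pc0 H k g', wl2 H h0 a1, wl2 H h1 a2,
       c2 H (c13 H (i3 H (wr2 H h2 g0')) (wl3 H h1 a3))
            (c13 H (ic H h2 a1) (i3 H (wl2 H h1 g2)))))"

definition pwr2 :: "('o,'a,'b,'c) gray_data \<Rightarrow>
    ('a \<times> 'a \<times> 'a \<times> 'a \<times> 'b) \<times> ('a \<times> 'a \<times> 'a \<times> 'a \<times> 'b) \<times> 'b \<times> 'b \<times> 'c \<Rightarrow>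
    'a \<times> 'a \<times> 'a \<times> 'a \<times> 'b \<Rightarrow>
    ('a \<times> 'a \<times> 'a \<times> 'a \<times> 'b) \<times> ('a \<times> 'a \<times> 'a \<times> 'a \<times> 'b) \<times> 'b \<times> 'b \<times> 'c" where
  "pwr2 H al k = (case k of (_, _, k0, k1, k2) \<Rightarrow> case al of (g, g', a1, a2, a3) \<Rightarrow>
      case g of (_, _, _, g1, _) \<Rightarrow> case g' of (_, _, _, _, g2') \<Rightarrow>
      (pc0 H g k, pc0 H g' k, wr2 H a1 k0, wr2 H a2 k1,
       c2 H (c13 H (i3 H (wr2 H g2' k0)) (ic_inv H a2 k2))
            (c13 H (wr3 H a3 k0) (i3 H (wl2 H g1 k2)))))"

definition path :: "('o,'a,'b,'c) gray_data \<Rightarrow>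
   ('a, 'a \<times> 'a \<times> 'a \<times> 'a \<times> 'b,
    ('a \<times> 'a \<times> 'a \<times> 'a \<times> 'b) \<times> ('a \<times> 'a \<times> 'a \<times> 'a \<times> 'b) \<times> 'b \<times> 'b \<times> 'c,
    (('a \<times> 'a \<times> 'a \<times> 'a \<times> 'b) \<times> ('a \<times> 'a \<times> 'a \<times> 'a \<times> 'b) \<times> 'b \<times> 'b \<times> 'c) \<times>
    (('a \<times> 'a \<times> 'a \<times> 'a \<times> 'b) \<times> ('a \<times> 'a \<times> 'a \<times> 'a \<times> 'b) \<times> 'b \<times> 'b \<times> 'c) \<times> 'c \<times> 'c) gray_data" where
  "path H = (let
      PAr = {(f, f', g0, g1, g2). f \<in> Ar H \<and> f' \<in> Ar H \<and> g0 \<in> Ar H \<and> g1 \<in> Ar H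
              \<and> s1 H g0 = s1 H f \<and> t1 H g0 = s1 H f' \<and> s1 H g1 = t1 H f \<and> t1 H g1 = t1 H f'
              \<and> g2 \<in> Tw H \<and> s2 H g2 = c0 H g1 f \<and> t2 H g2 = c0 H f' g0};
      PTw = {(g, h, a1, a2, a3). g \<in> PAr \<and> h \<in> PAr
              \<and> fst g = fst h \<and> fst (snd g) = fst (snd h)
              \<and> (case g of (f, f', g0, g1, g2) \<Rightarrow> case h of (_, _, h0, h1, h2) \<Rightarrow>
                   a1 \<in> Tw H \<and> s2 H a1 = g0 \<and> t2 H a1 = h0
                 \<and> a2 \<in> Tw H \<and> s2 H a2 = g1 \<and> t2 H a2 = h1
                 \<and> a3 \<in> Th H \<and> s3 H a3 = c1 H (wl2 H f' a1) g2 \<and> t3 H a3 = c1 H h2 (wr2 H a2 f))}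
    in \<lparr> Ob = Ar H,
      Ar = PAr,
      Tw = PTw,
      Th = {(al, be, C1, C2). al \<in> PTw \<and> be \<in> PTw
              \<and> fst al = fst be \<and> fst (snd al) = fst (snd be)
              \<and> (case al of (g, h, a1, a2, a3) \<Rightarrow> case be of (_, _, b1, b2, b3) \<Rightarrow>
                  case g of (f, f', _, _, g2) \<Rightarrow> case h of (_, _, _, _, h2) \<Rightarrow>
                   C1 \<in> Th H \<and> s3 H C1 = a1 \<and> t3 H C1 = b1
                 \<and> C2 \<in> Th H \<and> s3 H C2 = a2 \<and> t3 H C2 = b2
                 \<and> c2 H b3 (c13 H (wl3 H f' C1) (i3 H g2)) = c2 H (c13 H (i3 H h2) (wr3 H C2 f)) a3)},
      s1 = (\<lambda>g. fst g),
      t1 = (\<lambda>g. fst (snd g)),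
      s2 = (\<lambda>al. fst al),
      t2 = (\<lambda>al. fst (snd al)),
      s3 = (\<lambda>C. fst C),
      t3 = (\<lambda>C. fst (snd C)),
      i1 = (\<lambda>f. (f, f, i1 H (s1 H f), i1 H (t1 H f), i2 H f)),
      i2 = (\<lambda>g. case g of (_, _, g0, g1, g2) \<Rightarrow> (g, g, i2 H g0, i2 H g1, i3 H g2)),
      i3 = (\<lambda>al. case al of (_, _, a1, a2, _) \<Rightarrow> (al, al, i3 H a1, i3 H a2)),
      c0 = pc0 H,
      c1 = pc1 H,
      c2 = (\<lambda>(_, ga, D1, D2) (al, _, C1, C2). (al, ga, c2 H D1 C1, c2 H D2 C2)),
      c13 = (\<lambda>(al', be', D1, D2) (al, be, C1, C2).
                (pc1 H al' al, pc1 H be' be, c13 H D1 C1, c13 H D2 C2)),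
      wl2 = pwl2 H,
      wr2 = pwr2 H,
      wl3 = (\<lambda>k (al, be, C1, C2). case k of (_, _, h0, h1, _) \<Rightarrow>
                (pwl2 H k al, pwl2 H k be, wl3 H h0 C1, wl3 H h1 C2)),
      wr3 = (\<lambda>(al, be, C1, C2) k. case k of (_, _, k0, k1, _) \<Rightarrow>
                (pwr2 H al k, pwr2 H be k, wr3 H C1 k0, wr3 H C2 k1)),
      ic = (\<lambda>be al. case be of (k, k', b1, b2, _) \<Rightarrow> case al of (g, g', a1, a2, _) \<Rightarrow>
                (pc1 H (pwl2 H k' al) (pwr2 H be g), pc1 H (pwr2 H be g') (pwl2 H k al),
                 ic H b1 a1, ic H b2 a2)) \<rparr>)"

definition pfun_ar :: "('o,'a,'b,'c,'o2,'a2,'b2,'c2) gray_fun \<Rightarrow>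
    'a \<times> 'a \<times> 'a \<times> 'a \<times> 'b \<Rightarrow> 'a2 \<times> 'a2 \<times> 'a2 \<times> 'a2 \<times> 'b2" where
  "pfun_ar F g = (case g of (f, f', g0, g1, g2) \<Rightarrow> (fAr F f, fAr F f', fAr F g0, fAr F g1, fTw F g2))"

definition pfun_tw :: "('o,'a,'b,'c,'o2,'a2,'b2,'c2) gray_fun \<Rightarrow>
    ('a \<times> 'a \<times> 'a \<times> 'a \<times> 'b) \<times> ('a \<times> 'a \<times> 'a \<times> 'a \<times> 'b) \<times> 'b \<times> 'b \<times> 'c \<Rightarrow>
    ('a2 \<times> 'a2 \<times> 'a2 \<times> 'a2 \<times> 'b2) \<times> ('a2 \<times> 'a2 \<times> 'a2 \<times> 'a2 \<times> 'b2) \<times> 'b2 \<times> 'b2 \<times> 'c2" where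
  "pfun_tw F al = (case al of (g, h, a1, a2, a3) \<Rightarrow>
      (pfun_ar F g, pfun_ar F h, fTw F a1, fTw F a2, fTh F a3))"

definition pfun :: "('o,'a,'b,'c,'o2,'a2,'b2,'c2) gray_fun \<Rightarrow>
   ('a, 'a \<times> 'a \<times> 'a \<times> 'a \<times> 'b,
    ('a \<times> 'a \<times> 'a \<times> 'a \<times> 'b) \<times> ('a \<times> 'a \<times> 'a \<times> 'a \<times> 'b) \<times> 'b \<times> 'b \<times> 'c,
    (('a \<times> 'a \<times> 'a \<times> 'a \<times> 'b) \<times> ('a \<times> 'a \<times> 'a \<times> 'a \<times> 'b) \<times> 'b \<times> 'b \<times> 'c) \<times>
    (('a \<times> 'a \<times> 'a \<times> 'a \<times> 'b) \<times> ('a \<times> 'a \<times> 'a \<times> 'a \<times> 'b) \<times> 'b \<times> 'b \<times> 'c) \<times> 'c \<times> 'c,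
    'a2, 'a2 \<times> 'a2 \<times> 'a2 \<times> 'a2 \<times> 'b2,
    ('a2 \<times> 'a2 \<times> 'a2 \<times> 'a2 \<times> 'b2) \<times> ('a2 \<times> 'a2 \<times> 'a2 \<times> 'a2 \<times> 'b2) \<times> 'b2 \<times> 'b2 \<times> 'c2,
    (('a2 \<times> 'a2 \<times> 'a2 \<times> 'a2 \<times> 'b2) \<times> ('a2 \<times> 'a2 \<times> 'a2 \<times> 'a2 \<times> 'b2) \<times> 'b2 \<times> 'b2 \<times> 'c2) \<times>
    (('a2 \<times> 'a2 \<times> 'a2 \<times> 'a2 \<times> 'b2) \<times> ('a2 \<times> 'a2 \<times> 'a2 \<times> 'a2 \<times> 'b2) \<times> 'b2 \<times> 'b2 \<times> 'c2) \<times> 'c2 \<times> 'c2)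
   gray_fun" where
  "pfun F = \<lparr>fOb = fAr F, fAr = pfun_ar F, fTw = pfun_tw F,
     fTh = (\<lambda>(al, be, C1, C2). (pfun_tw F al, pfun_tw F be, fTh F C1, fTh F C2))\<rparr>"

end

theory Submission
  imports Defs
begin

text \<open>
  The counit e of Q1 G is locally bijective: a 2-cell (\<alpha>; u, v) of Q1 G is nothing but a 2-cell
  \<alpha> : \<epsilon> u \<Rightarrow> \<epsilon> v of G, and likewise for 3-cells.  Consequently a 2- or 3-cell of the path
  space of Q1 G is determined by its boundary together with its image in the path space of G, and
  every cell of the path space of G whose boundary has been lifted has a lift.  Given K and u this
  forces the lift \<open>u_hat\<close> cell by cell.  It is a strict Gray-functor because lifting commutes with
  all operations of the path spaces, which is a direct computation since the operations of Q1 G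
  are computed in G.
\<close>

section \<open>Cells of Q1 G and of path spaces\<close>

lemma Q1_simps [simp]:
  "s1 (Q1 G) u = fst u" "t1 (Q1 G) u = fst (snd u)"
  "s2 (Q1 G) (a, u, v) = u" "t2 (Q1 G) (a, u, v) = v"
  "s3 (Q1 G) (C, a, b, u, v) = (a, u, v)" "t3 (Q1 G) (C, a, b, u, v) = (b, u, v)"
  "i2 (Q1 G) u = (i2 G (qeps G u), u, u)"
  "i3 (Q1 G) (a, u, v) = (i3 G a, a, a, u, v)"
  "c0 (Q1 G) = qc0"
  "c1 (Q1 G) (b, v, w) (a, u, v') = (c1 G b a, u, w)"
  "c2 (Q1 G) (D, b', c, x, y) (C, a, b, u, v) = (c2 G D C, a, c, u, v)"
  "c13 (Q1 G) (D, a', b', v, w) (C, a, b, u, v') = (c13 G D C, c1 G a' a, c1 G b' b, u, w)"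
  "wl2 (Q1 G) g (a, u, v) = (wl2 G (qeps G g) a, qc0 g u, qc0 g v)"
  "wr2 (Q1 G) (a, u, v) f = (wr2 G a (qeps G f), qc0 u f, qc0 v f)"
  "wl3 (Q1 G) g (C, a, b, u, v) =
     (wl3 G (qeps G g) C, wl2 G (qeps G g) a, wl2 G (qeps G g) b, qc0 g u, qc0 g v)"
  "wr3 (Q1 G) (C, a, b, u, v) f =
     (wr3 G C (qeps G f), wr2 G a (qeps G f), wr2 G b (qeps G f), qc0 u f, qc0 v f)"
  "ic (Q1 G) (b, g, g') (a, f, f') =
     (ic G b a, c1 G (wl2 G (qeps G g') a) (wr2 G b (qeps G f)),
      c1 G (wr2 G b (qeps G f')) (wl2 G (qeps G g) a), qc0 g f, qc0 g' f')"
  by (simp_all add: Q1_def Let_def)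

lemma Q1_Ar: "u \<in> Ar (Q1 G) \<longleftrightarrow> qchain G (fst u) (fst (snd u)) (snd (snd u))"
  by (cases u) (simp add: Q1_def Let_def)

lemma Q1_Tw: "(a, u, v) \<in> Tw (Q1 G) \<longleftrightarrow> u \<in> Ar (Q1 G) \<and> v \<in> Ar (Q1 G) \<and> fst u = fst v
   \<and> fst (snd u) = fst (snd v) \<and> a \<in> Tw G \<and> s2 G a = qeps G u \<and> t2 G a = qeps G v"
  by (simp add: Q1_def Let_def)

lemma Q1_Th: "(C, a, b, u, v) \<in> Th (Q1 G) \<longleftrightarrow> (a, u, v) \<in> Tw (Q1 G) \<and> (b, u, v) \<in> Tw (Q1 G)
   \<and> C \<in> Th G \<and> s3 G C = a \<and> t3 G C = b"
  by (simp add: Q1_def Let_def)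

lemma path_simps [simp]:
  "Ob (path H) = Ar H"
  "s1 (path H) g = fst g" "t1 (path H) g = fst (snd g)"
  "s2 (path H) al = fst al" "t2 (path H) al = fst (snd al)"
  "s3 (path H) X = fst X" "t3 (path H) X = fst (snd X)"
  "i2 (path H) (f, f', g0, g1, g2) = ((f, f', g0, g1, g2), (f, f', g0, g1, g2), i2 H g0, i2 H g1, i3 H g2)"
  "i3 (path H) (g, h, a1, a2, a3) = ((g, h, a1, a2, a3), (g, h, a1, a2, a3), i3 H a1, i3 H a2)"
  "c0 (path H) = pc0 H" "c1 (path H) = pc1 H"
  "c2 (path H) (x, ga, D1, D2) (al, y, C1, C2) = (al, ga, c2 H D1 C1, c2 H D2 C2)"
  "c13 (path H) (al', be', D1, D2) (al, be, C1, C2) = (pc1 H al' al, pc1 H be' be, c13 H D1 C1, c13 H D2 C2)"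
  "wl2 (path H) = pwl2 H" "wr2 (path H) = pwr2 H"
  "wl3 (path H) (k, k', h0, h1, k2) (al, be, C1, C2) =
     (pwl2 H (k, k', h0, h1, k2) al, pwl2 H (k, k', h0, h1, k2) be, wl3 H h0 C1, wl3 H h1 C2)"
  "wr3 (path H) (al, be, C1, C2) (k, k', h0, h1, k2) =
     (pwr2 H al (k, k', h0, h1, k2), pwr2 H be (k, k', h0, h1, k2), wr3 H C1 h0, wr3 H C2 h1)"
  "ic (path H) (j, j', b1, b2, b3) (g, g', a1, a2, a3) =
     (pc1 H (pwl2 H j' (g, g', a1, a2, a3)) (pwr2 H (j, j', b1, b2, b3) g),
      pc1 H (pwr2 H (j, j', b1, b2, b3) g') (pwl2 H j (g, g', a1, a2, a3)), ic H b1 a1, ic H b2 a2)"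
  by (simp_all add: path_def Let_def)

lemma path_Ar: "(f, f', g0, g1, g2) \<in> Ar (path H) \<longleftrightarrow> f \<in> Ar H \<and> f' \<in> Ar H \<and> g0 \<in> Ar H \<and> g1 \<in> Ar H
    \<and> s1 H g0 = s1 H f \<and> t1 H g0 = s1 H f' \<and> s1 H g1 = t1 H f \<and> t1 H g1 = t1 H f'
    \<and> g2 \<in> Tw H \<and> s2 H g2 = c0 H g1 f \<and> t2 H g2 = c0 H f' g0"
  by (simp add: path_def Let_def)

lemma path_Tw: "((f, f', g0, g1, g2), (e, e', h0, h1, h2), a1, a2, a3) \<in> Tw (path H) \<longleftrightarrow>
    (f, f', g0, g1, g2) \<in> Ar (path H) \<and> (e, e', h0, h1, h2) \<in> Ar (path H) \<and> e = f \<and> e' = f'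
    \<and> a1 \<in> Tw H \<and> s2 H a1 = g0 \<and> t2 H a1 = h0
    \<and> a2 \<in> Tw H \<and> s2 H a2 = g1 \<and> t2 H a2 = h1
    \<and> a3 \<in> Th H \<and> s3 H a3 = c1 H (wl2 H f' a1) g2 \<and> t3 H a3 = c1 H h2 (wr2 H a2 f)"
  unfolding path_def Let_def by auto

lemma path_Th: "(((f, f', g0, g1, g2), (e, e', h0, h1, h2), a1, a2, a3), (g', h', b1, b2, b3), C1, C2)
      \<in> Th (path H) \<longleftrightarrow>
    ((f, f', g0, g1, g2), (e, e', h0, h1, h2), a1, a2, a3) \<in> Tw (path H) \<and> (g', h', b1, b2, b3) \<in> Tw (path H)
    \<and> g' = (f, f', g0, g1, g2) \<and> h' = (e, e', h0, h1, h2)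
    \<and> C1 \<in> Th H \<and> s3 H C1 = a1 \<and> t3 H C1 = b1
    \<and> C2 \<in> Th H \<and> s3 H C2 = a2 \<and> t3 H C2 = b2
    \<and> c2 H b3 (c13 H (wl3 H f' C1) (i3 H g2)) = c2 H (c13 H (i3 H h2) (wr3 H C2 f)) a3"
  unfolding path_def Let_def by (cases g'; cases h'; auto)

lemma pfun_simps [simp]:
  "fOb (pfun F) = fAr F" "fAr (pfun F) = pfun_ar F" "fTw (pfun F) = pfun_tw F"
  "fTh (pfun F) (al, be, C1, C2) = (pfun_tw F al, pfun_tw F be, fTh F C1, fTh F C2)"
  "pfun_ar F (f, f', g0, g1, g2) = (fAr F f, fAr F f', fAr F g0, fAr F g1, fTw F g2)"
  "pfun_tw F (g, h, a1, a2, a3) = (pfun_ar F g, pfun_ar F h, fTw F a1, fTw F a2, fTh F a3)"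
  by (simp_all add: pfun_def pfun_ar_def pfun_tw_def)

lemma eQ_simps [simp]: "fOb (eQ G) = (\<lambda>x. x)" "fAr (eQ G) = qeps G" "fTw (eQ G) = fst" "fTh (eQ G) = fst"
  by (simp_all add: eQ_def)

section \<open>Typing rules in a Gray-category\<close>

definition inverse3 :: "('o,'a,'b,'c) gray_data \<Rightarrow> 'c \<Rightarrow> 'c \<Rightarrow> bool" where
  "inverse3 G X D \<longleftrightarrow> D \<in> Th G \<and> s3 G D = t3 G X \<and> t3 G D = s3 G X
      \<and> c2 G D X = i3 G (s3 G X) \<and> c2 G X D = i3 G (t3 G X)"

lemma ic_inv_eq_The_inverse3: "ic_inv G b a = (THE D. inverse3 G (ic G b a) D)"
  by (simp add: ic_inv_def inverse3_def)

context gray_category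
begin

lemma c0_Ar: "\<lbrakk>f \<in> Ar G; g \<in> Ar G; t1 G f = s1 G g\<rbrakk> \<Longrightarrow> c0 G g f \<in> Ar G"
  and c0_s1: "\<lbrakk>f \<in> Ar G; g \<in> Ar G; t1 G f = s1 G g\<rbrakk> \<Longrightarrow> s1 G (c0 G g f) = s1 G f"
  and c0_t1: "\<lbrakk>f \<in> Ar G; g \<in> Ar G; t1 G f = s1 G g\<rbrakk> \<Longrightarrow> t1 G (c0 G g f) = t1 G g"
  using c0_typ by auto

lemma i2_Tw: "f \<in> Ar G \<Longrightarrow> i2 G f \<in> Tw G" and i2_s2: "f \<in> Ar G \<Longrightarrow> s2 G (i2 G f) = f"
  and i2_t2: "f \<in> Ar G \<Longrightarrow> t2 G (i2 G f) = f"
  using i2_typ by auto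

lemma i3_Th: "a \<in> Tw G \<Longrightarrow> i3 G a \<in> Th G" and i3_s3: "a \<in> Tw G \<Longrightarrow> s3 G (i3 G a) = a"
  and i3_t3: "a \<in> Tw G \<Longrightarrow> t3 G (i3 G a) = a"
  using i3_typ by auto

lemma s2_Ar: "a \<in> Tw G \<Longrightarrow> s2 G a \<in> Ar G" and t2_Ar: "a \<in> Tw G \<Longrightarrow> t2 G a \<in> Ar G"
  and s1_t2: "a \<in> Tw G \<Longrightarrow> s1 G (t2 G a) = s1 G (s2 G a)"
  and t1_t2: "a \<in> Tw G \<Longrightarrow> t1 G (t2 G a) = t1 G (s2 G a)"
  using tw_typ by auto

lemma s3_Tw: "C \<in> Th G \<Longrightarrow> s3 G C \<in> Tw G" and t3_Tw: "C \<in> Th G \<Longrightarrow> t3 G C \<in> Tw G"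
  and s2_t3: "C \<in> Th G \<Longrightarrow> s2 G (t3 G C) = s2 G (s3 G C)"
  and t2_t3: "C \<in> Th G \<Longrightarrow> t2 G (t3 G C) = t2 G (s3 G C)"
  using th_typ by auto

lemma c1_Tw: "\<lbrakk>a \<in> Tw G; b \<in> Tw G; t2 G a = s2 G b\<rbrakk> \<Longrightarrow> c1 G b a \<in> Tw G"
  and c1_s2: "\<lbrakk>a \<in> Tw G; b \<in> Tw G; t2 G a = s2 G b\<rbrakk> \<Longrightarrow> s2 G (c1 G b a) = s2 G a"
  and c1_t2: "\<lbrakk>a \<in> Tw G; b \<in> Tw G; t2 G a = s2 G b\<rbrakk> \<Longrightarrow> t2 G (c1 G b a) = t2 G b"
  using c1_typ by auto

lemma c2_Th: "\<lbrakk>C \<in> Th G; D \<in> Th G; t3 G C = s3 G D\<rbrakk> \<Longrightarrow> c2 G D C \<in> Th G"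
  and c2_s3: "\<lbrakk>C \<in> Th G; D \<in> Th G; t3 G C = s3 G D\<rbrakk> \<Longrightarrow> s3 G (c2 G D C) = s3 G C"
  and c2_t3: "\<lbrakk>C \<in> Th G; D \<in> Th G; t3 G C = s3 G D\<rbrakk> \<Longrightarrow> t3 G (c2 G D C) = t3 G D"
  using c2_typ by auto

lemma c13_Th: "\<lbrakk>C \<in> Th G; D \<in> Th G; t2 G (s3 G C) = s2 G (s3 G D)\<rbrakk> \<Longrightarrow> c13 G D C \<in> Th G"
  and c13_s3: "\<lbrakk>C \<in> Th G; D \<in> Th G; t2 G (s3 G C) = s2 G (s3 G D)\<rbrakk> \<Longrightarrow>
    s3 G (c13 G D C) = c1 G (s3 G D) (s3 G C)"
  and c13_t3: "\<lbrakk>C \<in> Th G; D \<in> Th G; t2 G (s3 G C) = s2 G (s3 G D)\<rbrakk> \<Longrightarrow>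
    t3 G (c13 G D C) = c1 G (t3 G D) (t3 G C)"
  using c13_typ by auto

lemma wl2_Tw: "\<lbrakk>g \<in> Ar G; a \<in> Tw G; t1 G (s2 G a) = s1 G g\<rbrakk> \<Longrightarrow> wl2 G g a \<in> Tw G"
  and wl2_s2: "\<lbrakk>g \<in> Ar G; a \<in> Tw G; t1 G (s2 G a) = s1 G g\<rbrakk> \<Longrightarrow> s2 G (wl2 G g a) = c0 G g (s2 G a)"
  and wl2_t2: "\<lbrakk>g \<in> Ar G; a \<in> Tw G; t1 G (s2 G a) = s1 G g\<rbrakk> \<Longrightarrow> t2 G (wl2 G g a) = c0 G g (t2 G a)"
  using wl2_typ by auto

lemma wr2_Tw: "\<lbrakk>f \<in> Ar G; a \<in> Tw G; s1 G (s2 G a) = t1 G f\<rbrakk> \<Longrightarrow> wr2 G a f \<in> Tw G"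
  and wr2_s2: "\<lbrakk>f \<in> Ar G; a \<in> Tw G; s1 G (s2 G a) = t1 G f\<rbrakk> \<Longrightarrow> s2 G (wr2 G a f) = c0 G (s2 G a) f"
  and wr2_t2: "\<lbrakk>f \<in> Ar G; a \<in> Tw G; s1 G (s2 G a) = t1 G f\<rbrakk> \<Longrightarrow> t2 G (wr2 G a f) = c0 G (t2 G a) f"
  using wr2_typ by auto

lemma wl3_Th: "\<lbrakk>g \<in> Ar G; C \<in> Th G; t1 G (s2 G (s3 G C)) = s1 G g\<rbrakk> \<Longrightarrow> wl3 G g C \<in> Th G"
  and wl3_s3: "\<lbrakk>g \<in> Ar G; C \<in> Th G; t1 G (s2 G (s3 G C)) = s1 G g\<rbrakk> \<Longrightarrow>
    s3 G (wl3 G g C) = wl2 G g (s3 G C)"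
  and wl3_t3: "\<lbrakk>g \<in> Ar G; C \<in> Th G; t1 G (s2 G (s3 G C)) = s1 G g\<rbrakk> \<Longrightarrow>
    t3 G (wl3 G g C) = wl2 G g (t3 G C)"
  using wl3_typ by auto

lemma wr3_Th: "\<lbrakk>f \<in> Ar G; C \<in> Th G; s1 G (s2 G (s3 G C)) = t1 G f\<rbrakk> \<Longrightarrow> wr3 G C f \<in> Th G"
  and wr3_s3: "\<lbrakk>f \<in> Ar G; C \<in> Th G; s1 G (s2 G (s3 G C)) = t1 G f\<rbrakk> \<Longrightarrow>
    s3 G (wr3 G C f) = wr2 G (s3 G C) f"
  and wr3_t3: "\<lbrakk>f \<in> Ar G; C \<in> Th G; s1 G (s2 G (s3 G C)) = t1 G f\<rbrakk> \<Longrightarrow>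
    t3 G (wr3 G C f) = wr2 G (t3 G C) f"
  using wr3_typ by auto

lemma ic_Th: "\<lbrakk>a \<in> Tw G; b \<in> Tw G; s1 G (s2 G b) = t1 G (s2 G a)\<rbrakk> \<Longrightarrow> ic G b a \<in> Th G"
  and ic_s3: "\<lbrakk>a \<in> Tw G; b \<in> Tw G; s1 G (s2 G b) = t1 G (s2 G a)\<rbrakk> \<Longrightarrow>
    s3 G (ic G b a) = c1 G (wl2 G (t2 G b) a) (wr2 G b (s2 G a))"
  and ic_t3: "\<lbrakk>a \<in> Tw G; b \<in> Tw G; s1 G (s2 G b) = t1 G (s2 G a)\<rbrakk> \<Longrightarrow>
    t3 G (ic G b a) = c1 G (wr2 G b (t2 G a)) (wl2 G (s2 G b) a)"
  using ic_typ by auto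

lemma inverse3_unique:
  assumes X: "X \<in> Th G" and D: "inverse3 G X D" and D': "inverse3 G X D'"
  shows "D = D'"
proof -
  have "D = c2 G D (c2 G X D')"
    using D D' c2_unit[of D] by (simp add: inverse3_def)
  also have "\<dots> = c2 G (c2 G D X) D'"
    using X D D' by (intro c2_assoc) (auto simp: inverse3_def)
  also have "\<dots> = D'"
    using D D' c2_unit[of D'] by (simp add: inverse3_def)
  finally show ?thesis .
qed

lemma ic_inv_inverse3:
  assumes "a \<in> Tw G" "b \<in> Tw G" "s1 G (s2 G b) = t1 G (s2 G a)"
  shows "inverse3 G (ic G b a) (ic_inv G b a)"
proof -
  obtain D where D: "inverse3 G (ic G b a) D"
    using ic_inv[OF assms] by (auto simp: inverse3_def)
  then have "(THE D. inverse3 G (ic G b a) D) = D"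
    using inverse3_unique ic_Th[OF assms] by blast
  then show ?thesis
    using D by (simp add: ic_inv_eq_The_inverse3)
qed

lemma ic_inv_Th: "\<lbrakk>a \<in> Tw G; b \<in> Tw G; s1 G (s2 G b) = t1 G (s2 G a)\<rbrakk> \<Longrightarrow> ic_inv G b a \<in> Th G"
  and ic_inv_s3: "\<lbrakk>a \<in> Tw G; b \<in> Tw G; s1 G (s2 G b) = t1 G (s2 G a)\<rbrakk> \<Longrightarrow>
    s3 G (ic_inv G b a) = t3 G (ic G b a)"
  and ic_inv_t3: "\<lbrakk>a \<in> Tw G; b \<in> Tw G; s1 G (s2 G b) = t1 G (s2 G a)\<rbrakk> \<Longrightarrow>
    t3 G (ic_inv G b a) = s3 G (ic G b a)"
  using ic_inv_inverse3 by (auto simp: inverse3_def)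

lemmas cell_typing = c0_Ar c0_s1 c0_t1 i2_Tw i2_s2 i2_t2 i3_Th i3_s3 i3_t3
  s2_Ar t2_Ar s1_t2 t1_t2 s3_Tw t3_Tw s2_t3 t2_t3 c1_Tw c1_s2 c1_t2 c2_Th c2_s3 c2_t3
  c13_Th c13_s3 c13_t3 wl2_Tw wl2_s2 wl2_t2 wr2_Tw wr2_s2 wr2_t2 wl3_Th wl3_s3 wl3_t3
  wr3_Th wr3_s3 wr3_t3 ic_Th ic_s3 ic_t3 ic_inv_Th ic_inv_s3 ic_inv_t3

end

section \<open>Composites of chains of 1-cells\<close>

lemma qc0_simps [simp]: "fst (qc0 v u) = fst u" "fst (snd (qc0 v u)) = fst (snd v)"
  by (simp_all add: qc0_def)

lemma qc0_assoc [simp]: "qc0 w (qc0 v u) = qc0 (qc0 w v) u"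
  by (simp add: qc0_def)

lemma qchain_append: "qchain G y z gs \<Longrightarrow> qchain G x y fs \<Longrightarrow> qchain G x z (gs @ fs)"
  by (induction gs arbitrary: z) auto

lemma qc0_Ar: "\<lbrakk>u \<in> Ar (Q1 G); v \<in> Ar (Q1 G); fst v = fst (snd u)\<rbrakk> \<Longrightarrow> qc0 v u \<in> Ar (Q1 G)"
  unfolding Q1_Ar qc0_def by (auto intro: qchain_append)

lemma qeps_Nil: "qeps G (x, y, []) = i1 G x"
  and qeps_Cons: "qeps G (x, y, f # fs) = c0 G f (qeps G (x, z, fs))"
  by (simp_all add: qeps_def)

lemma inverse3_Q1:
  assumes "(C, a, b, u, v) \<in> Th (Q1 G)"
  shows "inverse3 (Q1 G) (C, a, b, u, v) (D, x, y, p, q) \<longleftrightarrow>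
    x = b \<and> y = a \<and> p = u \<and> q = v \<and> inverse3 G C D"
  using assms by (auto simp: inverse3_def Q1_Th)

context gray_category
begin

lemma qeps_qchain:
  "qchain G x y fs \<Longrightarrow>
    qeps G (x, y, fs) \<in> Ar G \<and> s1 G (qeps G (x, y, fs)) = x \<and> t1 G (qeps G (x, y, fs)) = y"
  by (induction fs arbitrary: y) (auto simp: qeps_def i1_typ c0_typ)

lemma qeps_Ar: "u \<in> Ar (Q1 G) \<Longrightarrow> qeps G u \<in> Ar G"
  and qeps_s1: "u \<in> Ar (Q1 G) \<Longrightarrow> s1 G (qeps G u) = fst u"
  and qeps_t1: "u \<in> Ar (Q1 G) \<Longrightarrow> t1 G (qeps G u) = fst (snd u)"
  using qeps_qchain[of "fst u" "fst (snd u)" "snd (snd u)"] unfolding Q1_Ar by auto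

lemma qeps_qc0:
  assumes "u \<in> Ar (Q1 G)" "v \<in> Ar (Q1 G)" "fst v = fst (snd u)"
  shows "qeps G (qc0 v u) = c0 G (qeps G v) (qeps G u)"
proof -
  obtain x y fs z gs where u: "u = (x, y, fs)" and v: "v = (y, z, gs)" and gs: "qchain G y z gs"
    using assms by (cases u, cases v) (auto simp: Q1_Ar)
  have e: "qeps G u \<in> Ar G" "t1 G (qeps G u) = y"
    using assms(1) u by (simp_all add: qeps_Ar qeps_t1)
  have "foldr (c0 G) gs (qeps G u) = c0 G (qeps G (y, z, gs)) (qeps G u)"
    using gs
  proof (induction gs arbitrary: z)
    case Nil
    then show ?case
      using c0_unit[OF e(1)] e(2) by (simp add: qeps_Nil)
  next
    case (Cons g gs)
    have "foldr (c0 G) (g # gs) (qeps G u) = c0 G g (c0 G (qeps G (y, s1 G g, gs)) (qeps G u))"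
      using Cons.IH[of "s1 G g"] Cons.prems by simp
    also have "\<dots> = c0 G (qeps G (y, z, g # gs)) (qeps G u)"
      using Cons.prems c0_assoc qeps_qchain[of y "s1 G g" gs] e by (simp add: qeps_Cons[of _ _ _ _ _ "s1 G g"])
    finally show ?case .
  qed
  then show ?thesis
    using u v by (simp add: qeps_def qc0_def)
qed

lemma ic_inv_Q1:
  assumes b: "(b, g, g') \<in> Tw (Q1 G)" and a: "(a, f, f') \<in> Tw (Q1 G)" and ab: "fst g = fst (snd f)"
  shows "ic_inv (Q1 G) (b, g, g') (a, f, f')
    = (ic_inv G b a, t3 G (ic G b a), s3 G (ic G b a), qc0 g f, qc0 g' f')"
proof -
  have cells: "a \<in> Tw G" "b \<in> Tw G" "s1 G (s2 G b) = t1 G (s2 G a)"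
    using a b ab by (auto simp: Q1_Tw qeps_s1 qeps_t1)
  have ic: "ic (Q1 G) (b, g, g') (a, f, f') = (ic G b a, s3 G (ic G b a), t3 G (ic G b a), qc0 g f, qc0 g' f')"
    using a b cells by (simp add: Q1_Tw ic_s3 ic_t3)
  have "ic (Q1 G) (b, g, g') (a, f, f') \<in> Th (Q1 G)"
    using a b ab cells unfolding ic by (auto simp: Q1_Th Q1_Tw qc0_Ar qeps_qc0 qeps_Ar qeps_s1 qeps_t1 cell_typing)
  then have "inverse3 (Q1 G) (ic (Q1 G) (b, g, g') (a, f, f')) D \<longleftrightarrow>
      D = (ic_inv G b a, t3 G (ic G b a), s3 G (ic G b a), qc0 g f, qc0 g' f')" for D
    using inverse3_unique[OF ic_Th[OF cells]] ic_inv_inverse3[OF cells]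
    unfolding ic by (cases D) (auto simp: inverse3_Q1)
  then show ?thesis
    by (simp add: ic_inv_eq_The_inverse3)
qed

end

section \<open>Lifting cells along the path functor of the counit\<close>

type_synonym ('o, 'a) q_ar = "'o \<times> 'o \<times> 'a list"
type_synonym ('o, 'a, 'b) q_tw = "'b \<times> ('o, 'a) q_ar \<times> ('o, 'a) q_ar"
type_synonym ('o, 'a, 'b, 'c) q_th = "'c \<times> 'b \<times> 'b \<times> ('o, 'a) q_ar \<times> ('o, 'a) q_ar"
type_synonym ('a, 'b) path_ar = "'a \<times> 'a \<times> 'a \<times> 'a \<times> 'b"
type_synonym ('a, 'b, 'c) path_tw = "('a, 'b) path_ar \<times> ('a, 'b) path_ar \<times> 'b \<times> 'b \<times> 'c"
type_synonym ('a, 'b, 'c) path_th = "('a, 'b, 'c) path_tw \<times> ('a, 'b, 'c) path_tw \<times> 'c \<times> 'c"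
type_synonym ('o, 'a, 'b) qpath_ar = "(('o, 'a) q_ar, ('o, 'a, 'b) q_tw) path_ar"
type_synonym ('o, 'a, 'b, 'c) qpath_tw = "(('o, 'a) q_ar, ('o, 'a, 'b) q_tw, ('o, 'a, 'b, 'c) q_th) path_tw"
type_synonym ('o, 'a, 'b, 'c) qpath_th = "(('o, 'a) q_ar, ('o, 'a, 'b) q_tw, ('o, 'a, 'b, 'c) q_th) path_th"

abbreviation qpath_ar :: "('o, 'a) q_ar \<Rightarrow> ('o, 'a) q_ar \<Rightarrow> ('o, 'a) q_ar \<Rightarrow> ('o, 'a) q_ar \<Rightarrow> 'b \<Rightarrow>
    ('o, 'a, 'b) qpath_ar" where
  "qpath_ar l l' m0 m1 \<gamma> \<equiv> (l, l', m0, m1, (\<gamma>, qc0 m1 l, qc0 l' m0))"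

abbreviation qpath_tw :: "('o, 'a, 'b, 'c) gray_data \<Rightarrow> ('o, 'a) q_ar \<Rightarrow> ('o, 'a) q_ar \<Rightarrow>
    ('o, 'a) q_ar \<Rightarrow> ('o, 'a) q_ar \<Rightarrow> 'b \<Rightarrow> ('o, 'a) q_ar \<Rightarrow> ('o, 'a) q_ar \<Rightarrow> 'b \<Rightarrow> 'b \<Rightarrow> 'b \<Rightarrow> 'c \<Rightarrow>
    ('o, 'a, 'b, 'c) qpath_tw" where
  "qpath_tw G l l' m0 m1 \<gamma> n0 n1 \<eta> \<alpha>1 \<alpha>2 \<Gamma> \<equiv> (qpath_ar l l' m0 m1 \<gamma>, qpath_ar l l' n0 n1 \<eta>,
     (\<alpha>1, m0, n0), (\<alpha>2, m1, n1), (\<Gamma>, s3 G \<Gamma>, t3 G \<Gamma>, qc0 m1 l, qc0 l' n0))"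

text \<open>The 2-cell of the path space of Q1 G from g to h over \<beta>: its components in Q1 G only record
  endpoints, and these are forced by g and h.\<close>

definition lift_tw :: "('o, 'a, 'b, 'c) gray_data \<Rightarrow> ('o, 'a, 'b) qpath_ar \<Rightarrow> ('o, 'a, 'b) qpath_ar \<Rightarrow>
    ('a, 'b, 'c) path_tw \<Rightarrow> ('o, 'a, 'b, 'c) qpath_tw" where
  "lift_tw G g h \<beta> = (case g of (l, l', m0, m1, _) \<Rightarrow> case h of (_, _, n0, n1, _) \<Rightarrow>
     case \<beta> of (_, _, \<alpha>1, \<alpha>2, \<Gamma>) \<Rightarrow>
     (g, h, (\<alpha>1, m0, n0), (\<alpha>2, m1, n1), (\<Gamma>, s3 G \<Gamma>, t3 G \<Gamma>, qc0 m1 l, qc0 l' n0)))"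

definition lift_th :: "('o, 'a, 'b, 'c) gray_data \<Rightarrow> ('o, 'a, 'b, 'c) qpath_tw \<Rightarrow> ('o, 'a, 'b, 'c) qpath_tw \<Rightarrow>
    ('a, 'b, 'c) path_th \<Rightarrow> ('o, 'a, 'b, 'c) qpath_th" where
  "lift_th G A B \<Theta> = (case A of (_, _, (_, m0, n0), (_, m1, n1), _) \<Rightarrow> case \<Theta> of (_, _, C1, C2) \<Rightarrow>
     (A, B, (C1, s3 G C1, t3 G C1, m0, n0), (C2, s3 G C2, t3 G C2, m1, n1)))"

lemma lift_tw_simp [simp]:
  "lift_tw G (l, l', m0, m1, g2) (e, e', n0, n1, h2) (x, y, \<alpha>1, \<alpha>2, \<Gamma>) =
    ((l, l', m0, m1, g2), (e, e', n0, n1, h2), (\<alpha>1, m0, n0), (\<alpha>2, m1, n1),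
     (\<Gamma>, s3 G \<Gamma>, t3 G \<Gamma>, qc0 m1 l, qc0 l' n0))"
  by (simp add: lift_tw_def)

lemma lift_th_simp [simp]:
  "lift_th G (g, h, (\<alpha>1, m0, n0), (\<alpha>2, m1, n1), A3) B (x, y, C1, C2) =
    ((g, h, (\<alpha>1, m0, n0), (\<alpha>2, m1, n1), A3), B,
     (C1, s3 G C1, t3 G C1, m0, n0), (C2, s3 G C2, t3 G C2, m1, n1))"
  by (simp add: lift_th_def)

lemma lift_tw_fst: "fst (lift_tw G g h \<beta>) = g" "fst (snd (lift_tw G g h \<beta>)) = h"
  by (cases g rule: prod_cases5, cases h rule: prod_cases5, cases \<beta> rule: prod_cases5; simp)+

lemma lift_th_fst: "fst (lift_th G A B \<Theta>) = A" "fst (snd (lift_th G A B \<Theta>)) = B"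
  by (cases A rule: prod_cases5, cases \<Theta> rule: prod_cases4; simp add: lift_th_def split: prod.split)+

lemma path_Q1_Ar: "(l, l', m0, m1, (\<gamma>, U, V)) \<in> Ar (path (Q1 G)) \<longleftrightarrow>
    l \<in> Ar (Q1 G) \<and> l' \<in> Ar (Q1 G) \<and> m0 \<in> Ar (Q1 G) \<and> m1 \<in> Ar (Q1 G)
    \<and> fst m0 = fst l \<and> fst (snd m0) = fst l' \<and> fst m1 = fst (snd l) \<and> fst (snd m1) = fst (snd l')
    \<and> U = qc0 m1 l \<and> V = qc0 l' m0
    \<and> \<gamma> \<in> Tw G \<and> s2 G \<gamma> = qeps G (qc0 m1 l) \<and> t2 G \<gamma> = qeps G (qc0 l' m0)"
  by (auto simp: path_Ar Q1_Tw qc0_Ar)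

lemma path_Q1_ArE:
  assumes "g \<in> Ar (path (Q1 G))"
  obtains l l' m0 m1 \<gamma> where "g = qpath_ar l l' m0 m1 \<gamma>"
    "l \<in> Ar (Q1 G)" "l' \<in> Ar (Q1 G)" "m0 \<in> Ar (Q1 G)" "m1 \<in> Ar (Q1 G)"
    "fst m0 = fst l" "fst (snd m0) = fst l'" "fst m1 = fst (snd l)" "fst (snd m1) = fst (snd l')"
    "\<gamma> \<in> Tw G" "s2 G \<gamma> = qeps G (qc0 m1 l)" "t2 G \<gamma> = qeps G (qc0 l' m0)"
  using assms by (cases g) (auto simp: path_Ar Q1_Tw)

lemma path_Tw_Ar: "(g, h, a1, a2, a3) \<in> Tw (path H) \<Longrightarrow>
    g \<in> Ar (path H) \<and> h \<in> Ar (path H) \<and> fst g = fst h \<and> fst (snd g) = fst (snd h)"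
  by (auto simp: path_def Let_def)

lemma path_Q1_TwE:
  assumes "A \<in> Tw (path (Q1 G))"
  obtains l l' m0 m1 \<gamma> n0 n1 \<eta> \<alpha>1 \<alpha>2 \<Gamma> where
    "A = qpath_tw G l l' m0 m1 \<gamma> n0 n1 \<eta> \<alpha>1 \<alpha>2 \<Gamma>"
proof -
  obtain g h a1 a2 a3 where A: "A = (g, h, a1, a2, a3)"
    by (cases A rule: prod_cases5)
  have gh: "g \<in> Ar (path (Q1 G))" "h \<in> Ar (path (Q1 G))" "fst g = fst h" "fst (snd g) = fst (snd h)"
    using path_Tw_Ar[OF assms[unfolded A]] by blast+
  obtain l l' m0 m1 \<gamma> where g: "g = qpath_ar l l' m0 m1 \<gamma>"
    using gh(1) by (rule path_Q1_ArE)
  obtain e e' n0 n1 \<eta> where h: "h = qpath_ar e e' n0 n1 \<eta>"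
    using gh(2) by (rule path_Q1_ArE)
  obtain \<alpha>1 u1 v1 \<alpha>2 u2 v2 \<Gamma> x y u3 v3 where "a1 = (\<alpha>1, u1, v1)" "a2 = (\<alpha>2, u2, v2)"
      "a3 = (\<Gamma>, x, y, u3, v3)"
    by (cases a1 rule: prod_cases3, cases a2 rule: prod_cases3, cases a3 rule: prod_cases5)
  moreover from this assms gh have "e = l" "e' = l'" "u1 = m0" "v1 = n0" "u2 = m1" "v2 = n1"
      "x = s3 G \<Gamma>" "y = t3 G \<Gamma>" "u3 = qc0 m1 l" "v3 = qc0 l' n0"
    unfolding A g h by (auto simp: path_Tw Q1_Tw Q1_Th)
  ultimately show thesis
    by (intro that[of l l' m0 m1 \<gamma> n0 n1 \<eta> \<alpha>1 \<alpha>2 \<Gamma>]) (simp add: A g h)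
qed

text \<open>The equations are oriented towards the endpoints of l and l', so that together they form a
  terminating simp set.\<close>

lemma path_Q1_TwD:
  assumes "qpath_tw G l l' m0 m1 \<gamma> n0 n1 \<eta> \<alpha>1 \<alpha>2 \<Gamma> \<in> Tw (path (Q1 G))"
  shows "l \<in> Ar (Q1 G)" "l' \<in> Ar (Q1 G)" "m0 \<in> Ar (Q1 G)" "m1 \<in> Ar (Q1 G)"
    "n0 \<in> Ar (Q1 G)" "n1 \<in> Ar (Q1 G)" "fst m0 = fst l" "fst n0 = fst l"
    "fst (snd m0) = fst l'" "fst (snd n0) = fst l'" "fst m1 = fst (snd l)" "fst n1 = fst (snd l)"
    "fst (snd m1) = fst (snd l')" "fst (snd n1) = fst (snd l')"
    "\<gamma> \<in> Tw G" "s2 G \<gamma> = qeps G (qc0 m1 l)" "t2 G \<gamma> = qeps G (qc0 l' m0)"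
    "\<eta> \<in> Tw G" "s2 G \<eta> = qeps G (qc0 n1 l)" "t2 G \<eta> = qeps G (qc0 l' n0)"
    "\<alpha>1 \<in> Tw G" "s2 G \<alpha>1 = qeps G m0" "t2 G \<alpha>1 = qeps G n0"
    "\<alpha>2 \<in> Tw G" "s2 G \<alpha>2 = qeps G m1" "t2 G \<alpha>2 = qeps G n1"
    "\<Gamma> \<in> Th G" "s3 G \<Gamma> = c1 G (wl2 G (qeps G l') \<alpha>1) \<gamma>" "t3 G \<Gamma> = c1 G \<eta> (wr2 G \<alpha>2 (qeps G l))"
proof -
  have g: "qpath_ar l l' m0 m1 \<gamma> \<in> Ar (path (Q1 G))"
    and h: "qpath_ar l l' n0 n1 \<eta> \<in> Ar (path (Q1 G))"
    using path_Tw_Ar[OF assms] by blast+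
  have a: "(\<alpha>1, m0, n0) \<in> Tw (Q1 G)" "(\<alpha>2, m1, n1) \<in> Tw (Q1 G)" "\<Gamma> \<in> Th G"
    "s3 G \<Gamma> = c1 G (wl2 G (qeps G l') \<alpha>1) \<gamma>" "t3 G \<Gamma> = c1 G \<eta> (wr2 G \<alpha>2 (qeps G l))"
    using assms unfolding path_Tw Q1_Th by simp_all
  from g h show "l \<in> Ar (Q1 G)" "l' \<in> Ar (Q1 G)" "m0 \<in> Ar (Q1 G)" "m1 \<in> Ar (Q1 G)"
    "n0 \<in> Ar (Q1 G)" "n1 \<in> Ar (Q1 G)" "fst m0 = fst l" "fst n0 = fst l"
    "fst (snd m0) = fst l'" "fst (snd n0) = fst l'" "fst m1 = fst (snd l)" "fst n1 = fst (snd l)"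
    "fst (snd m1) = fst (snd l')" "fst (snd n1) = fst (snd l')"
    "\<gamma> \<in> Tw G" "s2 G \<gamma> = qeps G (qc0 m1 l)" "t2 G \<gamma> = qeps G (qc0 l' m0)"
    "\<eta> \<in> Tw G" "s2 G \<eta> = qeps G (qc0 n1 l)" "t2 G \<eta> = qeps G (qc0 l' n0)"
    unfolding path_Q1_Ar by simp_all
  from a show "\<alpha>1 \<in> Tw G" "s2 G \<alpha>1 = qeps G m0" "t2 G \<alpha>1 = qeps G n0"
    "\<alpha>2 \<in> Tw G" "s2 G \<alpha>2 = qeps G m1" "t2 G \<alpha>2 = qeps G n1"
    "\<Gamma> \<in> Th G" "s3 G \<Gamma> = c1 G (wl2 G (qeps G l') \<alpha>1) \<gamma>" "t3 G \<Gamma> = c1 G \<eta> (wr2 G \<alpha>2 (qeps G l))"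
    unfolding Q1_Tw by simp_all
qed

lemma lift_tw_eq: "A \<in> Tw (path (Q1 G)) \<Longrightarrow> lift_tw G (fst A) (fst (snd A)) (pfun_tw (eQ G) A) = A"
  by (erule path_Q1_TwE) simp

lemma pfun_lift_tw:
  "\<lbrakk>fst \<beta> = pfun_ar (eQ G) g; fst (snd \<beta>) = pfun_ar (eQ G) h\<rbrakk> \<Longrightarrow>
    pfun_tw (eQ G) (lift_tw G g h \<beta>) = \<beta>"
  by (cases g, cases h, cases \<beta>) auto

lemma path_Th_Tw: "(A, B, C1, C2) \<in> Th (path H) \<Longrightarrow>
    A \<in> Tw (path H) \<and> B \<in> Tw (path H) \<and> fst A = fst B \<and> fst (snd A) = fst (snd B)"
  by (auto simp: path_def Let_def)

lemma pfun_lift_th: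
  "\<lbrakk>fst \<Theta> = pfun_tw (eQ G) A; fst (snd \<Theta>) = pfun_tw (eQ G) B\<rbrakk>
    \<Longrightarrow> fTh (pfun (eQ G)) (lift_th G A B \<Theta>) = \<Theta>"
  by (cases A rule: prod_cases5, cases \<Theta> rule: prod_cases4) (auto simp: lift_th_def split: prod.split)

lemma path_Q1_ThE:
  assumes "X \<in> Th (path (Q1 G))"
  obtains l l' m0 m1 \<gamma> n0 n1 \<eta> \<alpha>1 \<alpha>2 \<Gamma> \<beta>1 \<beta>2 \<Delta> C1 C2 where
    "X = (qpath_tw G l l' m0 m1 \<gamma> n0 n1 \<eta> \<alpha>1 \<alpha>2 \<Gamma>,
          qpath_tw G l l' m0 m1 \<gamma> n0 n1 \<eta> \<beta>1 \<beta>2 \<Delta>,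
          (C1, \<alpha>1, \<beta>1, m0, n0), (C2, \<alpha>2, \<beta>2, m1, n1))"
proof -
  obtain A B X1 X2 where X: "X = (A, B, X1, X2)"
    by (cases X rule: prod_cases4)
  have A: "A \<in> Tw (path (Q1 G))" and B: "B \<in> Tw (path (Q1 G))" "fst A = fst B" "fst (snd A) = fst (snd B)"
    using path_Th_Tw[OF assms[unfolded X]] by blast+
  obtain l l' m0 m1 \<gamma> n0 n1 \<eta> \<alpha>1 \<alpha>2 \<Gamma> where A':
    "A = qpath_tw G l l' m0 m1 \<gamma> n0 n1 \<eta> \<alpha>1 \<alpha>2 \<Gamma>"
    using A by (rule path_Q1_TwE)
  obtain \<beta>1 \<beta>2 \<Delta> where B':
    "B = qpath_tw G l l' m0 m1 \<gamma> n0 n1 \<eta> \<beta>1 \<beta>2 \<Delta>"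
    using B unfolding A' by (auto elim: path_Q1_TwE)
  obtain C1 x1 y1 u1 v1 C2 x2 y2 u2 v2 where "X1 = (C1, x1, y1, u1, v1)" "X2 = (C2, x2, y2, u2, v2)"
    by (cases X1 rule: prod_cases5, cases X2 rule: prod_cases5)
  moreover from this assms have "x1 = \<alpha>1" "y1 = \<beta>1" "u1 = m0" "v1 = n0"
      "x2 = \<alpha>2" "y2 = \<beta>2" "u2 = m1" "v2 = n1"
    unfolding X A' B' by (auto simp: path_Th Q1_Th)
  ultimately show thesis
    using that unfolding X A' B' by blast
qed

lemma path_Q1_ThD:
  assumes "(qpath_tw G l l' m0 m1 \<gamma> n0 n1 \<eta> \<alpha>1 \<alpha>2 \<Gamma>,
          qpath_tw G l l' m0 m1 \<gamma> n0 n1 \<eta> \<beta>1 \<beta>2 \<Delta>,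
          (C1, \<alpha>1, \<beta>1, m0, n0), (C2, \<alpha>2, \<beta>2, m1, n1)) \<in> Th (path (Q1 G))"
  shows "qpath_tw G l l' m0 m1 \<gamma> n0 n1 \<eta> \<alpha>1 \<alpha>2 \<Gamma> \<in> Tw (path (Q1 G))"
    "qpath_tw G l l' m0 m1 \<gamma> n0 n1 \<eta> \<beta>1 \<beta>2 \<Delta> \<in> Tw (path (Q1 G))"
    "C1 \<in> Th G" "s3 G C1 = \<alpha>1" "t3 G C1 = \<beta>1" "C2 \<in> Th G" "s3 G C2 = \<alpha>2" "t3 G C2 = \<beta>2"
  using assms unfolding path_Th Q1_Th by blast+

lemma lift_th_eq:
  assumes "X \<in> Th (path (Q1 G))"
  shows "lift_th G (fst X) (fst (snd X)) (fTh (pfun (eQ G)) X) = X"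
proof -
  obtain l l' m0 m1 \<gamma> n0 n1 \<eta> \<alpha>1 \<alpha>2 \<Gamma> \<beta>1 \<beta>2 \<Delta> C1 C2 where X:
    "X = (qpath_tw G l l' m0 m1 \<gamma> n0 n1 \<eta> \<alpha>1 \<alpha>2 \<Gamma>, qpath_tw G l l' m0 m1 \<gamma> n0 n1 \<eta> \<beta>1 \<beta>2 \<Delta>,
          (C1, \<alpha>1, \<beta>1, m0, n0), (C2, \<alpha>2, \<beta>2, m1, n1))"
    using assms by (rule path_Q1_ThE)
  show ?thesis
    using path_Q1_ThD[OF assms[unfolded X]] unfolding X by simp
qed

context gray_category
begin

lemma path_Tw_boundary:
  assumes "((f, f', g0, g1, g2), (f, f', h0, h1, h2), a1, a2, a3) \<in> Tw (path G)"
  shows "s2 G (s3 G a3) = c0 G g1 f \<and> t2 G (s3 G a3) = c0 G f' h0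
    \<and> s2 G (t3 G a3) = c0 G g1 f \<and> t2 G (t3 G a3) = c0 G f' h0"
proof -
  have a: "a1 \<in> Tw G" "s2 G a1 = g0" "t2 G a1 = h0" "f' \<in> Ar G" "t1 G g0 = s1 G f'"
    and g2: "g2 \<in> Tw G" "s2 G g2 = c0 G g1 f" "t2 G g2 = c0 G f' g0"
    and a3: "a3 \<in> Th G" "s3 G a3 = c1 G (wl2 G f' a1) g2"
    using assms by (simp_all add: path_Tw path_Ar)
  have w: "wl2 G f' a1 \<in> Tw G" "s2 G (wl2 G f' a1) = c0 G f' g0" "t2 G (wl2 G f' a1) = c0 G f' h0"
    using wl2_typ[of f' a1] a by simp_all
  show ?thesis
    using a3 g2 w c1_typ[of g2 "wl2 G f' a1"] s2_t3[OF a3(1)] t2_t3[OF a3(1)] by simp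
qed

lemma lift_tw_Tw:
  assumes g: "g \<in> Ar (path (Q1 G))" and h: "h \<in> Ar (path (Q1 G))"
    and gh: "fst g = fst h" "fst (snd g) = fst (snd h)"
    and \<beta>: "\<beta> \<in> Tw (path G)" "fst \<beta> = pfun_ar (eQ G) g" "fst (snd \<beta>) = pfun_ar (eQ G) h"
  shows "lift_tw G g h \<beta> \<in> Tw (path (Q1 G))"
proof -
  obtain l l' m0 m1 \<gamma> where g': "g = qpath_ar l l' m0 m1 \<gamma>"
    using g by (rule path_Q1_ArE)
  obtain n0 n1 \<eta> where h': "h = qpath_ar l l' n0 n1 \<eta>"
    using h gh unfolding g' by (auto elim: path_Q1_ArE)
  obtain \<alpha>1 \<alpha>2 \<Gamma> where \<beta>': "\<beta> = (pfun_ar (eQ G) g, pfun_ar (eQ G) h, \<alpha>1, \<alpha>2, \<Gamma>)"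
    using \<beta> by (cases \<beta> rule: prod_cases5) auto
  have \<beta>'': "((qeps G l, qeps G l', qeps G m0, qeps G m1, \<gamma>), (qeps G l, qeps G l', qeps G n0, qeps G n1, \<eta>),
      \<alpha>1, \<alpha>2, \<Gamma>) \<in> Tw (path G)"
    using \<beta> unfolding \<beta>' g' h' by simp
  have q: "l \<in> Ar (Q1 G)" "l' \<in> Ar (Q1 G)" "m0 \<in> Ar (Q1 G)" "m1 \<in> Ar (Q1 G)"
    "n0 \<in> Ar (Q1 G)" "n1 \<in> Ar (Q1 G)" "fst m0 = fst l" "fst n0 = fst l"
    "fst (snd m0) = fst l'" "fst (snd n0) = fst l'" "fst m1 = fst (snd l)" "fst n1 = fst (snd l)"
    "fst (snd m1) = fst (snd l')" "fst (snd n1) = fst (snd l')"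
    using g h unfolding g' h' path_Q1_Ar by simp_all
  have "s2 G (s3 G \<Gamma>) = qeps G (qc0 m1 l) \<and> t2 G (s3 G \<Gamma>) = qeps G (qc0 l' n0)
    \<and> s2 G (t3 G \<Gamma>) = qeps G (qc0 m1 l) \<and> t2 G (t3 G \<Gamma>) = qeps G (qc0 l' n0)"
    using path_Tw_boundary[OF \<beta>''] q by (simp add: qeps_qc0)
  moreover have "\<Gamma> \<in> Th G"
    using \<beta>'' by (simp add: path_Tw)
  then have "s3 G \<Gamma> \<in> Tw G \<and> t3 G \<Gamma> \<in> Tw G"
    by (simp add: s3_Tw t3_Tw)
  ultimately show ?thesis
    using g h \<beta>'' q unfolding g' h' \<beta>'
    by (simp add: path_Tw Q1_Tw Q1_Th qc0_Ar)
qed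

lemma lift_th_Th:
  assumes A: "A \<in> Tw (path (Q1 G))" and B: "B \<in> Tw (path (Q1 G))"
    and AB: "fst A = fst B" "fst (snd A) = fst (snd B)"
    and \<Theta>: "\<Theta> \<in> Th (path G)" "fst \<Theta> = pfun_tw (eQ G) A" "fst (snd \<Theta>) = pfun_tw (eQ G) B"
  shows "lift_th G A B \<Theta> \<in> Th (path (Q1 G))"
proof -
  obtain l l' m0 m1 \<gamma> n0 n1 \<eta> \<alpha>1 \<alpha>2 \<Gamma> where A':
    "A = qpath_tw G l l' m0 m1 \<gamma> n0 n1 \<eta> \<alpha>1 \<alpha>2 \<Gamma>"
    using A by (rule path_Q1_TwE)
  obtain \<beta>1 \<beta>2 \<Delta> where B':
    "B = qpath_tw G l l' m0 m1 \<gamma> n0 n1 \<eta> \<beta>1 \<beta>2 \<Delta>"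
    using B AB unfolding A' by (auto elim: path_Q1_TwE)
  obtain C1 C2 where \<Theta>': "\<Theta> = (pfun_tw (eQ G) A, pfun_tw (eQ G) B, C1, C2)"
    using \<Theta> by (cases \<Theta> rule: prod_cases4) auto
  have "(\<alpha>1, m0, n0) \<in> Tw (Q1 G)" "(\<alpha>2, m1, n1) \<in> Tw (Q1 G)" "s3 G \<Gamma> = c1 G (wl2 G (qeps G l') \<alpha>1) \<gamma>"
    using A unfolding A' by (simp_all add: path_Tw)
  moreover have "(\<beta>1, m0, n0) \<in> Tw (Q1 G)" "(\<beta>2, m1, n1) \<in> Tw (Q1 G)" "t3 G \<Delta> = c1 G \<eta> (wr2 G \<beta>2 (qeps G l))"
    using B unfolding B' by (simp_all add: path_Tw)
  moreover have "C1 \<in> Th G" "s3 G C1 = \<alpha>1" "t3 G C1 = \<beta>1" "C2 \<in> Th G" "s3 G C2 = \<alpha>2" "t3 G C2 = \<beta>2"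
    "c2 G \<Delta> (c13 G (wl3 G (qeps G l') C1) (i3 G \<gamma>)) = c2 G (c13 G (i3 G \<eta>) (wr3 G C2 (qeps G l))) \<Gamma>"
    using \<Theta>(1) unfolding \<Theta>' A' B' by (simp_all add: path_Th)
  ultimately show ?thesis
    using A B unfolding A' B' \<Theta>' by (simp add: path_Th Q1_Th)
qed

lemma lift_tw_i2:
  assumes g: "g \<in> Ar (path (Q1 G))"
  shows "lift_tw G g g (i2 (path G) (pfun_ar (eQ G) g)) = i2 (path (Q1 G)) g"
proof -
  obtain l l' m0 m1 \<gamma> where g': "g = qpath_ar l l' m0 m1 \<gamma>" and "\<gamma> \<in> Tw G"
    using g by (rule path_Q1_ArE)
  then show ?thesis
    by (simp add: i3_s3 i3_t3)
qed

lemma lift_tw_c1: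
  assumes A: "A \<in> Tw (path (Q1 G))" and B: "B \<in> Tw (path (Q1 G))" and AB: "fst (snd A) = fst B"
  shows "lift_tw G (fst A) (fst (snd B)) (pc1 G (pfun_tw (eQ G) B) (pfun_tw (eQ G) A)) = pc1 (Q1 G) B A"
proof -
  obtain l l' m0 m1 \<gamma> n0 n1 \<eta> \<alpha>1 \<alpha>2 \<Gamma> where A':
    "A = qpath_tw G l l' m0 m1 \<gamma> n0 n1 \<eta> \<alpha>1 \<alpha>2 \<Gamma>"
    using A by (rule path_Q1_TwE)
  obtain p0 p1 \<theta> \<beta>1 \<beta>2 \<Delta> where B':
    "B = qpath_tw G l l' n0 n1 \<eta> p0 p1 \<theta> \<beta>1 \<beta>2 \<Delta>"
    using B AB unfolding A' by (auto elim: path_Q1_TwE)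
  show ?thesis
    using path_Q1_TwD[OF A[unfolded A']] path_Q1_TwD[OF B[unfolded B']] unfolding A' B'
    by (simp add: pc1_def cell_typing qeps_Ar qeps_s1 qeps_t1 qeps_qc0 c0_assoc c1_assoc)
qed

lemma lift_tw_wl2:
  assumes k: "k \<in> Ar (path (Q1 G))" and A: "A \<in> Tw (path (Q1 G))" and kA: "fst (snd (fst A)) = fst k"
  shows "lift_tw G (pc0 (Q1 G) k (fst A)) (pc0 (Q1 G) k (fst (snd A)))
      (pwl2 G (pfun_ar (eQ G) k) (pfun_tw (eQ G) A)) = pwl2 (Q1 G) k A"
proof -
  obtain l l' m0 m1 \<gamma> n0 n1 \<eta> \<alpha>1 \<alpha>2 \<Gamma> where A':
    "A = qpath_tw G l l' m0 m1 \<gamma> n0 n1 \<eta> \<alpha>1 \<alpha>2 \<Gamma>"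
    using A by (rule path_Q1_TwE)
  obtain k' r0 r1 \<kappa> where k': "k = qpath_ar l' k' r0 r1 \<kappa>"
    using k kA unfolding A' by (auto elim: path_Q1_ArE)
  show ?thesis
    using k[unfolded k' path_Q1_Ar] path_Q1_TwD[OF A[unfolded A']] unfolding A' k'
    by (simp add: pwl2_def pc0_def cell_typing qeps_Ar qeps_s1 qeps_t1 qeps_qc0 qc0_Ar
        c0_assoc c1_assoc wl2_c1 wl2_c0)
qed

lemma lift_tw_wr2:
  assumes k: "k \<in> Ar (path (Q1 G))" and A: "A \<in> Tw (path (Q1 G))" and kA: "fst (fst A) = fst (snd k)"
  shows "lift_tw G (pc0 (Q1 G) (fst A) k) (pc0 (Q1 G) (fst (snd A)) k)
      (pwr2 G (pfun_tw (eQ G) A) (pfun_ar (eQ G) k)) = pwr2 (Q1 G) A k"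
proof -
  obtain l l' m0 m1 \<gamma> n0 n1 \<eta> \<alpha>1 \<alpha>2 \<Gamma> where A':
    "A = qpath_tw G l l' m0 m1 \<gamma> n0 n1 \<eta> \<alpha>1 \<alpha>2 \<Gamma>"
    using A by (rule path_Q1_TwE)
  obtain k0 r0 r1 \<kappa> where k': "k = qpath_ar k0 l r0 r1 \<kappa>"
    using k kA unfolding A' by (auto elim: path_Q1_ArE)
  note Qk = k[unfolded k' path_Q1_Ar]
  note QA = path_Q1_TwD[OF A[unfolded A']]
  have ic_inv: "ic_inv (Q1 G) (\<alpha>2, m1, n1) (\<kappa>, qc0 r1 k0, qc0 l r0)
      = (ic_inv G \<alpha>2 \<kappa>, t3 G (ic G \<alpha>2 \<kappa>), s3 G (ic G \<alpha>2 \<kappa>), qc0 m1 (qc0 r1 k0), qc0 n1 (qc0 l r0))"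
    using Qk QA by (intro ic_inv_Q1) (simp_all add: Q1_Tw qc0_Ar)
  show ?thesis
    using Qk QA unfolding A' k'
    by (simp add: pwr2_def pc0_def ic_inv cell_typing qeps_Ar qeps_s1 qeps_t1 qeps_qc0 qc0_Ar
        c0_assoc c1_assoc wr2_c1 wr2_c0 wlr2)
qed

lemma lift_th_c2:
  assumes X: "X \<in> Th (path (Q1 G))" and Y: "Y \<in> Th (path (Q1 G))" and XY: "fst (snd X) = fst Y"
  shows "lift_th G (fst X) (fst (snd Y)) (c2 (path G) (fTh (pfun (eQ G)) Y) (fTh (pfun (eQ G)) X))
    = c2 (path (Q1 G)) Y X"
proof -
  obtain l l' m0 m1 \<gamma> n0 n1 \<eta> \<alpha>1 \<alpha>2 \<Gamma> \<beta>1 \<beta>2 \<Delta> C1 C2 where X':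
    "X = (qpath_tw G l l' m0 m1 \<gamma> n0 n1 \<eta> \<alpha>1 \<alpha>2 \<Gamma>,
          qpath_tw G l l' m0 m1 \<gamma> n0 n1 \<eta> \<beta>1 \<beta>2 \<Delta>,
          (C1, \<alpha>1, \<beta>1, m0, n0), (C2, \<alpha>2, \<beta>2, m1, n1))"
    using X by (rule path_Q1_ThE)
  obtain \<delta>1 \<delta>2 \<Theta> D1 D2 where Y':
    "Y = (qpath_tw G l l' m0 m1 \<gamma> n0 n1 \<eta> \<beta>1 \<beta>2 \<Delta>,
          qpath_tw G l l' m0 m1 \<gamma> n0 n1 \<eta> \<delta>1 \<delta>2 \<Theta>,
          (D1, \<beta>1, \<delta>1, m0, n0), (D2, \<beta>2, \<delta>2, m1, n1))"
    using Y XY unfolding X' by (auto elim: path_Q1_ThE)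
  note QX = path_Q1_ThD[OF X[unfolded X']] and QY = path_Q1_ThD[OF Y[unfolded Y']]
  show ?thesis
    using QX QY unfolding X' Y' by (simp add: c2_s3 c2_t3)
qed

lemma lift_th_i3:
  assumes A: "A \<in> Tw (path (Q1 G))"
  shows "lift_th G A A (i3 (path G) (pfun_tw (eQ G) A)) = i3 (path (Q1 G)) A"
proof -
  obtain l l' m0 m1 \<gamma> n0 n1 \<eta> \<alpha>1 \<alpha>2 \<Gamma> where A':
    "A = qpath_tw G l l' m0 m1 \<gamma> n0 n1 \<eta> \<alpha>1 \<alpha>2 \<Gamma>"
    using A by (rule path_Q1_TwE)
  show ?thesis
    using path_Q1_TwD[OF A[unfolded A']] unfolding A' by (simp add: i3_s3 i3_t3)
qed

lemma lift_th_c13: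
  assumes X: "X \<in> Th (path (Q1 G))" and Y: "Y \<in> Th (path (Q1 G))" and XY: "fst (snd (fst X)) = fst (fst Y)"
  shows "lift_th G (pc1 (Q1 G) (fst Y) (fst X)) (pc1 (Q1 G) (fst (snd Y)) (fst (snd X)))
      (c13 (path G) (fTh (pfun (eQ G)) Y) (fTh (pfun (eQ G)) X)) = c13 (path (Q1 G)) Y X"
proof -
  obtain l l' m0 m1 \<gamma> n0 n1 \<eta> \<alpha>1 \<alpha>2 \<Gamma> \<beta>1 \<beta>2 \<Delta> C1 C2 where X':
    "X = (qpath_tw G l l' m0 m1 \<gamma> n0 n1 \<eta> \<alpha>1 \<alpha>2 \<Gamma>,
          qpath_tw G l l' m0 m1 \<gamma> n0 n1 \<eta> \<beta>1 \<beta>2 \<Delta>,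
          (C1, \<alpha>1, \<beta>1, m0, n0), (C2, \<alpha>2, \<beta>2, m1, n1))"
    using X by (rule path_Q1_ThE)
  obtain p0 p1 \<theta> \<alpha>1' \<alpha>2' \<Gamma>' \<beta>1' \<beta>2' \<Delta>' D1 D2 where Y':
    "Y = (qpath_tw G l l' n0 n1 \<eta> p0 p1 \<theta> \<alpha>1' \<alpha>2' \<Gamma>',
          qpath_tw G l l' n0 n1 \<eta> p0 p1 \<theta> \<beta>1' \<beta>2' \<Delta>',
          (D1, \<alpha>1', \<beta>1', n0, p0), (D2, \<alpha>2', \<beta>2', n1, p1))"
    using Y XY unfolding X' by (auto elim: path_Q1_ThE)
  note QX = path_Q1_ThD[OF X[unfolded X']] and QY = path_Q1_ThD[OF Y[unfolded Y']]
  show ?thesis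
    using QX(3-8) QY(3-8) path_Q1_TwD[OF QX(1)] path_Q1_TwD[OF QX(2)] path_Q1_TwD[OF QY(1)]
      path_Q1_TwD[OF QY(2)]
    unfolding X' Y' by (simp add: pc1_def c13_s3 c13_t3)
qed

lemma lift_th_wl3:
  assumes k: "k \<in> Ar (path (Q1 G))" and X: "X \<in> Th (path (Q1 G))" and kX: "fst (snd (fst (fst X))) = fst k"
  shows "lift_th G (pwl2 (Q1 G) k (fst X)) (pwl2 (Q1 G) k (fst (snd X)))
      (wl3 (path G) (pfun_ar (eQ G) k) (fTh (pfun (eQ G)) X)) = wl3 (path (Q1 G)) k X"
proof -
  obtain l l' m0 m1 \<gamma> n0 n1 \<eta> \<alpha>1 \<alpha>2 \<Gamma> \<beta>1 \<beta>2 \<Delta> C1 C2 where X':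
    "X = (qpath_tw G l l' m0 m1 \<gamma> n0 n1 \<eta> \<alpha>1 \<alpha>2 \<Gamma>,
          qpath_tw G l l' m0 m1 \<gamma> n0 n1 \<eta> \<beta>1 \<beta>2 \<Delta>,
          (C1, \<alpha>1, \<beta>1, m0, n0), (C2, \<alpha>2, \<beta>2, m1, n1))"
    using X by (rule path_Q1_ThE)
  obtain k' r0 r1 \<kappa> where k': "k = qpath_ar l' k' r0 r1 \<kappa>"
    using k kX unfolding X' by (auto elim: path_Q1_ArE)
  note QX = path_Q1_ThD[OF X[unfolded X']]
  show ?thesis
    using QX(3-8) path_Q1_TwD[OF QX(1)] k[unfolded k' path_Q1_Ar]
    unfolding X' k' by (simp add: pwl2_def wl3_s3 wl3_t3 qeps_Ar qeps_s1 qeps_t1)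
qed

lemma lift_th_wr3:
  assumes k: "k \<in> Ar (path (Q1 G))" and X: "X \<in> Th (path (Q1 G))" and kX: "fst (fst (fst X)) = fst (snd k)"
  shows "lift_th G (pwr2 (Q1 G) (fst X) k) (pwr2 (Q1 G) (fst (snd X)) k)
      (wr3 (path G) (fTh (pfun (eQ G)) X) (pfun_ar (eQ G) k)) = wr3 (path (Q1 G)) X k"
proof -
  obtain l l' m0 m1 \<gamma> n0 n1 \<eta> \<alpha>1 \<alpha>2 \<Gamma> \<beta>1 \<beta>2 \<Delta> C1 C2 where X':
    "X = (qpath_tw G l l' m0 m1 \<gamma> n0 n1 \<eta> \<alpha>1 \<alpha>2 \<Gamma>,
          qpath_tw G l l' m0 m1 \<gamma> n0 n1 \<eta> \<beta>1 \<beta>2 \<Delta>,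
          (C1, \<alpha>1, \<beta>1, m0, n0), (C2, \<alpha>2, \<beta>2, m1, n1))"
    using X by (rule path_Q1_ThE)
  obtain k0 r0 r1 \<kappa> where k': "k = qpath_ar k0 l r0 r1 \<kappa>"
    using k kX unfolding X' by (auto elim: path_Q1_ArE)
  note QX = path_Q1_ThD[OF X[unfolded X']]
  show ?thesis
    using QX(3-8) path_Q1_TwD[OF QX(1)] k[unfolded k' path_Q1_Ar]
    unfolding X' k' by (simp add: pwr2_def wr3_s3 wr3_t3 qeps_Ar qeps_s1 qeps_t1)
qed

lemma lift_th_ic:
  assumes A: "A \<in> Tw (path (Q1 G))" and B: "B \<in> Tw (path (Q1 G))" and AB: "fst (fst B) = fst (snd (fst A))"
  shows "lift_th G (pc1 (Q1 G) (pwl2 (Q1 G) (fst (snd B)) A) (pwr2 (Q1 G) B (fst A)))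
      (pc1 (Q1 G) (pwr2 (Q1 G) B (fst (snd A))) (pwl2 (Q1 G) (fst B) A))
      (ic (path G) (pfun_tw (eQ G) B) (pfun_tw (eQ G) A)) = ic (path (Q1 G)) B A"
proof -
  obtain l l' m0 m1 \<gamma> n0 n1 \<eta> \<alpha>1 \<alpha>2 \<Gamma> where A':
    "A = qpath_tw G l l' m0 m1 \<gamma> n0 n1 \<eta> \<alpha>1 \<alpha>2 \<Gamma>"
    using A by (rule path_Q1_TwE)
  obtain k' p0 p1 \<pi> q0 q1 \<rho> \<beta>1 \<beta>2 \<Delta> where B':
    "B = qpath_tw G l' k' p0 p1 \<pi> q0 q1 \<rho> \<beta>1 \<beta>2 \<Delta>"
    using B AB unfolding A' by (auto elim: path_Q1_TwE)
  show ?thesis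
    using path_Q1_TwD[OF A[unfolded A']] path_Q1_TwD[OF B[unfolded B']] unfolding A' B'
    by (simp add: pc1_def pwl2_def pwr2_def pc0_def ic_s3 ic_t3 qeps_Ar qeps_s1 qeps_t1)
qed

end

section \<open>The lift of a functor of underlying categories\<close>

locale lifting_problem = G: gray_category G + KK: gray_category KK
  for G :: "('o, 'a, 'b, 'c) gray_data" and KK :: "('p, 'd, 'e, 'f) gray_data" +
  fixes K :: "('p, 'd, 'e, 'f, 'a, ('a, 'b) path_ar, ('a, 'b, 'c) path_tw, ('a, 'b, 'c) path_th) gray_fun"
    and u :: "('p \<Rightarrow> ('o, 'a) q_ar) \<times> ('d \<Rightarrow> ('o, 'a, 'b) qpath_ar)"
  assumes K: "strict_gray_functor KK (path G) K"
    and u: "functor1 KK (path (Q1 G)) u"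
    and K_Ob: "\<forall>x \<in> Ob KK. fOb (pfun (eQ G)) (fst u x) = fOb K x"
    and K_Ar: "\<forall>f \<in> Ar KK. fAr (pfun (eQ G)) (snd u f) = fAr K f"
begin

lemma K_cells:
  "f \<in> Ar KK \<Longrightarrow> fAr K f = pfun_ar (eQ G) (snd u f)"
  "a \<in> Tw KK \<Longrightarrow> fTw K a \<in> Tw (path G)"
  "C \<in> Th KK \<Longrightarrow> fTh K C \<in> Th (path G)"
  "a \<in> Tw KK \<Longrightarrow> fst (fTw K a) = fAr K (s2 KK a)"
  "a \<in> Tw KK \<Longrightarrow> fst (snd (fTw K a)) = fAr K (t2 KK a)"
  "C \<in> Th KK \<Longrightarrow> fst (fTh K C) = fTw K (s3 KK C)"
  "C \<in> Th KK \<Longrightarrow> fst (snd (fTh K C)) = fTw K (t3 KK C)"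
  using K K_Ar unfolding strict_gray_functor_def by simp_all

lemma u_cells:
  "f \<in> Ar KK \<Longrightarrow> snd u f \<in> Ar (path (Q1 G))"
  "f \<in> Ar KK \<Longrightarrow> fst (snd u f) = fst u (s1 KK f)"
  "f \<in> Ar KK \<Longrightarrow> fst (snd (snd u f)) = fst u (t1 KK f)"
  using u unfolding functor1_def by simp_all

lemma K_preserves:
  "f \<in> Ar KK \<Longrightarrow> fTw K (i2 KK f) = i2 (path G) (fAr K f)"
  "a \<in> Tw KK \<Longrightarrow> fTh K (i3 KK a) = i3 (path G) (fTw K a)"
  "\<lbrakk>a \<in> Tw KK; b \<in> Tw KK; t2 KK a = s2 KK b\<rbrakk> \<Longrightarrow> fTw K (c1 KK b a) = pc1 G (fTw K b) (fTw K a)"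
  "\<lbrakk>C \<in> Th KK; D \<in> Th KK; t3 KK C = s3 KK D\<rbrakk> \<Longrightarrow>
    fTh K (c2 KK D C) = c2 (path G) (fTh K D) (fTh K C)"
  "\<lbrakk>C \<in> Th KK; D \<in> Th KK; t2 KK (s3 KK C) = s2 KK (s3 KK D)\<rbrakk> \<Longrightarrow>
    fTh K (c13 KK D C) = c13 (path G) (fTh K D) (fTh K C)"
  "\<lbrakk>g \<in> Ar KK; a \<in> Tw KK; t1 KK (s2 KK a) = s1 KK g\<rbrakk> \<Longrightarrow>
    fTw K (wl2 KK g a) = pwl2 G (fAr K g) (fTw K a)"
  "\<lbrakk>f \<in> Ar KK; a \<in> Tw KK; s1 KK (s2 KK a) = t1 KK f\<rbrakk> \<Longrightarrow>
    fTw K (wr2 KK a f) = pwr2 G (fTw K a) (fAr K f)"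
  "\<lbrakk>g \<in> Ar KK; C \<in> Th KK; t1 KK (s2 KK (s3 KK C)) = s1 KK g\<rbrakk> \<Longrightarrow>
    fTh K (wl3 KK g C) = wl3 (path G) (fAr K g) (fTh K C)"
  "\<lbrakk>f \<in> Ar KK; C \<in> Th KK; s1 KK (s2 KK (s3 KK C)) = t1 KK f\<rbrakk> \<Longrightarrow>
    fTh K (wr3 KK C f) = wr3 (path G) (fTh K C) (fAr K f)"
  "\<lbrakk>a \<in> Tw KK; b \<in> Tw KK; s1 KK (s2 KK b) = t1 KK (s2 KK a)\<rbrakk> \<Longrightarrow>
    fTh K (ic KK b a) = ic (path G) (fTw K b) (fTw K a)"
  using K unfolding strict_gray_functor_def by simp_all

lemma u_c0: "\<lbrakk>f \<in> Ar KK; g \<in> Ar KK; t1 KK f = s1 KK g\<rbrakk> \<Longrightarrow>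
    snd u (c0 KK g f) = pc0 (Q1 G) (snd u g) (snd u f)"
  using u unfolding functor1_def by simp

definition u_hat_tw :: "'e \<Rightarrow> ('o, 'a, 'b, 'c) qpath_tw" where
  "u_hat_tw a = lift_tw G (snd u (s2 KK a)) (snd u (t2 KK a)) (fTw K a)"

definition u_hat_th :: "'f \<Rightarrow> ('o, 'a, 'b, 'c) qpath_th" where
  "u_hat_th C = lift_th G (u_hat_tw (s3 KK C)) (u_hat_tw (t3 KK C)) (fTh K C)"

lemma u_hat_tw_Tw: "a \<in> Tw KK \<Longrightarrow> u_hat_tw a \<in> Tw (path (Q1 G))"
  unfolding u_hat_tw_def using KK.tw_typ
  by (intro G.lift_tw_Tw) (simp_all add: u_cells K_cells)

lemma pfun_u_hat_tw: "a \<in> Tw KK \<Longrightarrow> pfun_tw (eQ G) (u_hat_tw a) = fTw K a"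
  unfolding u_hat_tw_def using KK.tw_typ by (intro pfun_lift_tw) (simp_all add: K_cells)

lemma u_hat_tw_fst: "fst (u_hat_tw a) = snd u (s2 KK a)" "fst (snd (u_hat_tw a)) = snd u (t2 KK a)"
  unfolding u_hat_tw_def by (simp_all add: lift_tw_fst)

lemma u_hat_th_fst: "fst (u_hat_th C) = u_hat_tw (s3 KK C)" "fst (snd (u_hat_th C)) = u_hat_tw (t3 KK C)"
  unfolding u_hat_th_def by (simp_all add: lift_th_fst)

lemma u_hat_th_Th: "C \<in> Th KK \<Longrightarrow> u_hat_th C \<in> Th (path (Q1 G))"
  unfolding u_hat_th_def using KK.th_typ
  by (intro G.lift_th_Th) (simp_all add: u_hat_tw_Tw pfun_u_hat_tw K_cells u_hat_tw_fst)

lemma pfun_u_hat_th: "C \<in> Th KK \<Longrightarrow> fTh (pfun (eQ G)) (u_hat_th C) = fTh K C"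
  unfolding u_hat_th_def using KK.th_typ by (intro pfun_lift_th) (simp_all add: K_cells pfun_u_hat_tw)

lemma u_hat_tw_i2: "f \<in> Ar KK \<Longrightarrow> u_hat_tw (i2 KK f) = i2 (path (Q1 G)) (snd u f)"
  unfolding u_hat_tw_def using KK.i2_typ
  by (simp add: K_preserves K_cells G.lift_tw_i2 u_cells)

lemma u_hat_tw_c1:
  assumes "a \<in> Tw KK" "b \<in> Tw KK" "t2 KK a = s2 KK b"
  shows "u_hat_tw (c1 KK b a) = pc1 (Q1 G) (u_hat_tw b) (u_hat_tw a)"
proof -
  have "u_hat_tw (c1 KK b a) = lift_tw G (snd u (s2 KK a)) (snd u (t2 KK b)) (pc1 G (fTw K b) (fTw K a))"
    using assms KK.c1_typ[OF assms] by (simp add: u_hat_tw_def K_preserves)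
  also have "\<dots> = pc1 (Q1 G) (u_hat_tw b) (u_hat_tw a)"
    using G.lift_tw_c1[OF u_hat_tw_Tw[OF assms(1)] u_hat_tw_Tw[OF assms(2)]] assms
    by (simp add: u_hat_tw_fst pfun_u_hat_tw)
  finally show ?thesis .
qed

lemma u_hat_tw_wl2:
  assumes "g \<in> Ar KK" "a \<in> Tw KK" "t1 KK (s2 KK a) = s1 KK g"
  shows "u_hat_tw (wl2 KK g a) = pwl2 (Q1 G) (snd u g) (u_hat_tw a)"
proof -
  have "u_hat_tw (wl2 KK g a) = lift_tw G (pc0 (Q1 G) (snd u g) (snd u (s2 KK a)))
      (pc0 (Q1 G) (snd u g) (snd u (t2 KK a))) (pwl2 G (fAr K g) (fTw K a))"
    using assms KK.wl2_typ[OF assms] KK.tw_typ[OF assms(2)]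
    by (simp add: u_hat_tw_def K_preserves u_c0)
  also have "\<dots> = pwl2 (Q1 G) (snd u g) (u_hat_tw a)"
    using G.lift_tw_wl2[OF u_cells(1)[OF assms(1)] u_hat_tw_Tw[OF assms(2)]] assms KK.tw_typ[OF assms(2)]
    by (simp add: u_hat_tw_fst pfun_u_hat_tw u_cells K_cells)
  finally show ?thesis .
qed

lemma u_hat_tw_wr2:
  assumes "f \<in> Ar KK" "a \<in> Tw KK" "s1 KK (s2 KK a) = t1 KK f"
  shows "u_hat_tw (wr2 KK a f) = pwr2 (Q1 G) (u_hat_tw a) (snd u f)"
proof -
  have "u_hat_tw (wr2 KK a f) = lift_tw G (pc0 (Q1 G) (snd u (s2 KK a)) (snd u f))
      (pc0 (Q1 G) (snd u (t2 KK a)) (snd u f)) (pwr2 G (fTw K a) (fAr K f))"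
    using assms KK.wr2_typ[OF assms] KK.tw_typ[OF assms(2)]
    by (simp add: u_hat_tw_def K_preserves u_c0)
  also have "\<dots> = pwr2 (Q1 G) (u_hat_tw a) (snd u f)"
    using G.lift_tw_wr2[OF u_cells(1)[OF assms(1)] u_hat_tw_Tw[OF assms(2)]] assms KK.tw_typ[OF assms(2)]
    by (simp add: u_hat_tw_fst pfun_u_hat_tw u_cells K_cells)
  finally show ?thesis .
qed

lemma u_hat_th_i3: "a \<in> Tw KK \<Longrightarrow> u_hat_th (i3 KK a) = i3 (path (Q1 G)) (u_hat_tw a)"
  using KK.i3_typ G.lift_th_i3[OF u_hat_tw_Tw] by (simp add: u_hat_th_def K_preserves pfun_u_hat_tw)

lemma u_hat_th_c2:
  assumes "C \<in> Th KK" "D \<in> Th KK" "t3 KK C = s3 KK D"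
  shows "u_hat_th (c2 KK D C) = c2 (path (Q1 G)) (u_hat_th D) (u_hat_th C)"
proof -
  have "u_hat_th (c2 KK D C) = lift_th G (u_hat_tw (s3 KK C)) (u_hat_tw (t3 KK D)) (c2 (path G) (fTh K D) (fTh K C))"
    using assms KK.c2_typ[OF assms] by (simp add: u_hat_th_def K_preserves)
  also have "\<dots> = c2 (path (Q1 G)) (u_hat_th D) (u_hat_th C)"
    using G.lift_th_c2[OF u_hat_th_Th[OF assms(1)] u_hat_th_Th[OF assms(2)]] assms
    by (simp add: u_hat_th_fst pfun_u_hat_th)
  finally show ?thesis .
qed

lemma u_hat_th_c13:
  assumes "C \<in> Th KK" "D \<in> Th KK" "t2 KK (s3 KK C) = s2 KK (s3 KK D)"
  shows "u_hat_th (c13 KK D C) = c13 (path (Q1 G)) (u_hat_th D) (u_hat_th C)"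
proof -
  have "t2 KK (t3 KK C) = s2 KK (t3 KK D)"
    using assms KK.th_typ by simp
  then have "u_hat_th (c13 KK D C) = lift_th G (pc1 (Q1 G) (u_hat_tw (s3 KK D)) (u_hat_tw (s3 KK C)))
      (pc1 (Q1 G) (u_hat_tw (t3 KK D)) (u_hat_tw (t3 KK C))) (c13 (path G) (fTh K D) (fTh K C))"
    using assms KK.c13_typ[OF assms] KK.th_typ by (simp add: u_hat_th_def K_preserves u_hat_tw_c1)
  also have "\<dots> = c13 (path (Q1 G)) (u_hat_th D) (u_hat_th C)"
    using G.lift_th_c13[OF u_hat_th_Th[OF assms(1)] u_hat_th_Th[OF assms(2)]] assms
    by (simp add: u_hat_th_fst u_hat_tw_fst pfun_u_hat_th)
  finally show ?thesis .
qed

lemma u_hat_th_wl3: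
  assumes "g \<in> Ar KK" "C \<in> Th KK" "t1 KK (s2 KK (s3 KK C)) = s1 KK g"
  shows "u_hat_th (wl3 KK g C) = wl3 (path (Q1 G)) (snd u g) (u_hat_th C)"
proof -
  have "u_hat_th (wl3 KK g C) = lift_th G (pwl2 (Q1 G) (snd u g) (u_hat_tw (s3 KK C)))
      (pwl2 (Q1 G) (snd u g) (u_hat_tw (t3 KK C))) (wl3 (path G) (fAr K g) (fTh K C))"
    using assms KK.wl3_typ[OF assms] KK.th_typ by (simp add: u_hat_th_def K_preserves u_hat_tw_wl2)
  also have "\<dots> = wl3 (path (Q1 G)) (snd u g) (u_hat_th C)"
    using G.lift_th_wl3[OF u_cells(1)[OF assms(1)] u_hat_th_Th[OF assms(2)]] assms KK.th_typ[OF assms(2)]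
      KK.tw_typ[of "s3 KK C"]
    by (simp add: u_hat_th_fst u_hat_tw_fst pfun_u_hat_th u_cells K_cells)
  finally show ?thesis .
qed

lemma u_hat_th_wr3:
  assumes "f \<in> Ar KK" "C \<in> Th KK" "s1 KK (s2 KK (s3 KK C)) = t1 KK f"
  shows "u_hat_th (wr3 KK C f) = wr3 (path (Q1 G)) (u_hat_th C) (snd u f)"
proof -
  have "u_hat_th (wr3 KK C f) = lift_th G (pwr2 (Q1 G) (u_hat_tw (s3 KK C)) (snd u f))
      (pwr2 (Q1 G) (u_hat_tw (t3 KK C)) (snd u f)) (wr3 (path G) (fTh K C) (fAr K f))"
    using assms KK.wr3_typ[OF assms] KK.th_typ by (simp add: u_hat_th_def K_preserves u_hat_tw_wr2)
  also have "\<dots> = wr3 (path (Q1 G)) (u_hat_th C) (snd u f)"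
    using G.lift_th_wr3[OF u_cells(1)[OF assms(1)] u_hat_th_Th[OF assms(2)]] assms KK.th_typ[OF assms(2)]
      KK.tw_typ[of "s3 KK C"]
    by (simp add: u_hat_th_fst u_hat_tw_fst pfun_u_hat_th u_cells K_cells)
  finally show ?thesis .
qed

lemma u_hat_th_ic:
  assumes "a \<in> Tw KK" "b \<in> Tw KK" "s1 KK (s2 KK b) = t1 KK (s2 KK a)"
  shows "u_hat_th (ic KK b a) = ic (path (Q1 G)) (u_hat_tw b) (u_hat_tw a)"
proof -
  have "u_hat_th (ic KK b a) = lift_th G
      (pc1 (Q1 G) (pwl2 (Q1 G) (snd u (t2 KK b)) (u_hat_tw a)) (pwr2 (Q1 G) (u_hat_tw b) (snd u (s2 KK a))))
      (pc1 (Q1 G) (pwr2 (Q1 G) (u_hat_tw b) (snd u (t2 KK a))) (pwl2 (Q1 G) (snd u (s2 KK b)) (u_hat_tw a)))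
      (ic (path G) (fTw K b) (fTw K a))"
    using assms KK.ic_typ[OF assms] KK.tw_typ[OF assms(1)] KK.tw_typ[OF assms(2)]
    by (simp add: u_hat_th_def K_preserves u_hat_tw_c1 u_hat_tw_wl2 u_hat_tw_wr2
        KK.wl2_typ KK.wr2_typ KK.c0_typ)
  also have "\<dots> = ic (path (Q1 G)) (u_hat_tw b) (u_hat_tw a)"
    using G.lift_th_ic[OF u_hat_tw_Tw[OF assms(1)] u_hat_tw_Tw[OF assms(2)]] assms KK.tw_typ
    by (simp add: u_hat_tw_fst pfun_u_hat_tw u_cells)
  finally show ?thesis .
qed

definition u_hat :: "('p, 'd, 'e, 'f, ('o, 'a) q_ar, ('o, 'a, 'b) qpath_ar, ('o, 'a, 'b, 'c) qpath_tw,
    ('o, 'a, 'b, 'c) qpath_th) gray_fun" where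
  "u_hat = \<lparr>fOb = fst u, fAr = snd u, fTw = u_hat_tw, fTh = u_hat_th\<rparr>"

lemma u_hat_strict: "strict_gray_functor KK (path (Q1 G)) u_hat"
  using u unfolding strict_gray_functor_def functor1_def u_hat_def
  by (simp add: u_hat_tw_Tw u_hat_th_Th u_hat_tw_fst u_hat_th_fst u_hat_tw_i2 u_hat_th_i3 u_hat_tw_c1
      u_hat_th_c2 u_hat_th_c13 u_hat_tw_wl2 u_hat_tw_wr2 u_hat_th_wl3 u_hat_th_wr3 u_hat_th_ic)

lemma u_hat_lifts_u: "fun1_eq_on KK (under1 u_hat) u"
  by (simp add: fun1_eq_on_def under1_def u_hat_def)

lemma u_hat_over_K: "gfun_eq_on KK (gcomp (pfun (eQ G)) u_hat) K"
  using K_Ob K_Ar by (simp add: gfun_eq_on_def gcomp_def u_hat_def pfun_u_hat_tw pfun_u_hat_th)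

lemma u_hat_unique:
  assumes v: "strict_gray_functor KK (path (Q1 G)) v" and vu: "fun1_eq_on KK (under1 v) u"
    and vK: "gfun_eq_on KK (gcomp (pfun (eQ G)) v) K"
  shows "gfun_eq_on KK v u_hat"
proof -
  have vAr: "fAr v f = snd u f" if "f \<in> Ar KK" for f
    using vu that by (simp add: fun1_eq_on_def under1_def)
  have vTw: "fTw v a \<in> Tw (path (Q1 G))" "fst (fTw v a) = fAr v (s2 KK a)"
    "fst (snd (fTw v a)) = fAr v (t2 KK a)" "pfun_tw (eQ G) (fTw v a) = fTw K a" if "a \<in> Tw KK" for a
    using v vK that by (simp_all add: strict_gray_functor_def gfun_eq_on_def gcomp_def)
  have vTh: "fTh v C \<in> Th (path (Q1 G))" "fst (fTh v C) = fTw v (s3 KK C)"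
    "fst (snd (fTh v C)) = fTw v (t3 KK C)" "fTh (pfun (eQ G)) (fTh v C) = fTh K C" if "C \<in> Th KK" for C
    using v vK that by (simp_all add: strict_gray_functor_def gfun_eq_on_def gcomp_def)
  have Tw: "fTw v a = u_hat_tw a" if a: "a \<in> Tw KK" for a
    using lift_tw_eq[OF vTw(1)[OF a]] vTw[OF a] vAr KK.tw_typ[OF a] by (simp add: u_hat_tw_def)
  have "fTh v C = u_hat_th C" if C: "C \<in> Th KK" for C
    using lift_th_eq[OF vTh(1)[OF C]] vTh[OF C] Tw KK.th_typ[OF C] by (simp add: u_hat_th_def)
  with Tw vu show ?thesis
    by (simp add: gfun_eq_on_def fun1_eq_on_def under1_def u_hat_def)
qed

end

theorem mainTheorem13:
  fixes G :: "('o,'a,'b,'c) gray_data"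
    and KK :: "('p,'d,'e,'f) gray_data"
  assumes "gray_category G"
    and "gray_category KK"
  shows "cartesian1_wrt KK (path (Q1 G)) (path G) (pfun (eQ G))"
  unfolding cartesian1_wrt_def
proof (intro allI impI)
  fix K u
  assume "strict_gray_functor KK (path G) K" "functor1 KK (path (Q1 G)) u"
    "(\<forall>x\<in>Ob KK. fOb (pfun (eQ G)) (fst u x) = fOb K x) \<and> (\<forall>f\<in>Ar KK. fAr (pfun (eQ G)) (snd u f) = fAr K f)"
  with assms interpret lifting_problem G KK K u
    by (intro lifting_problem.intro lifting_problem_axioms.intro) auto
  show "\<exists>uh. strict_gray_functor KK (path (Q1 G)) uh \<and> fun1_eq_on KK (under1 uh) u
      \<and> gfun_eq_on KK (gcomp (pfun (eQ G)) uh) K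
      \<and> (\<forall>uh'. strict_gray_functor KK (path (Q1 G)) uh' \<and> fun1_eq_on KK (under1 uh') u
          \<and> gfun_eq_on KK (gcomp (pfun (eQ G)) uh') K \<longrightarrow> gfun_eq_on KK uh' uh)"
    using u_hat_strict u_hat_lifts_u u_hat_over_K u_hat_unique by blast
qed

end
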